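(* Let $(a,D)$ be a weak hyperoperator on $\mathbb{R}^n$ in the complex Banach space $X$ such that for every $\phi\in\mathcal{D}(\mathbb{R}^n)$ the closure $\overline{\phi(a)}$ of $\phi(a)$ is a bounded operator on $X$, and assume $\bigcap_{\phi\in\mathcal{D}(\mathbb{R}^n)}\operatorname{Ker}\overline{\phi(a)}=\{0\}$. Then the map $A$ defined by $A(\phi)=\overline{\phi(a)}$ is a hyperoperator on $\mathbb{R}^n$ with $D_A=\bigcup_{\phi\in\mathcal{D}(\mathbb{R}^n)}\operatorname{Im}\overline{\phi(a)}\supseteq D$. Moreover, if $a'$ is the operator tuple associated to $A$, then $\overline{a'}=\overline{a}$.
   Context: $X$ is a complex Banach space, $L(X)$ the bounded operators. $\mathcal{D}(\mathbb{R}^n)=C_c^\infty(\mathbb{R}^n)$, $\mathcal{E}(\mathbb{R}^n)=C^\infty(\mathbb{R}^n)$ (complex-valued) with the topology of uniform convergence of all derivatives on compacts. For a dense subspace $D\subset X$, $\mathbf{L}(D)$ is the set of closable linear operators $D\to D$. A weak hyperoperator $(c,D)$ on $\mathbb{R}^n$ is a tuple $c=(c_1,\dots,c_n)$ of linear operators $D\to D$, with $D$ dense, $c$ closable, together with a linear multiplicative map $\mathcal{E}(\mathbb{R}^n)\to\mathbf{L}(D)$, $h\mapsto h(c)$, that sends each polynomial $p$ to $p(c_1,\dots,c_n)$, and such that $h_k(c)x\to h(c)x$ for all $x\in D$ whenever $h_k\to h$ in $\mathcal{E}(\mathbb{R}^n)$. A hyperoperator on $\mathbb{R}^n$ is a linear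 map $A:\mathcal{D}(\mathbb{R}^n)\to L(X)$, continuous ($A(\phi_j)\to0$ in operator norm when $\phi_j\to0$ in $\mathcal{D}(\mathbb{R}^n)$), multiplicative, with (i) $D_A:=\bigcup_\phi\operatorname{Im}A(\phi)$ dense and (ii) $\bigcap_\phi\operatorname{Ker}A(\phi)=\{0\}$. Its associated tuple $a'=(a'_1,\dots,a'_n)$ has domain $D_A$, $a'_jx:=A(\xi_j\phi)y$ if $x=A(\phi)y$ (well defined). Closures of tuples are taken via the closure of the graph in $X\times X^n$. *)

theory Defs
  imports "HOL-Analysis.Analysis"
begin

class complex_banach = banach +
  fixes scaleC :: "complex \<Rightarrow> 'a \<Rightarrow> 'a"
  assumes scaleC_of_real: "scaleC (complex_of_real r) x = r *\<^sub>R x"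
    and scaleC_add_right: "scaleC a (x + y) = scaleC a x + scaleC a y"
    and scaleC_add_left: "scaleC (a + b) x = scaleC a x + scaleC b x"
    and scaleC_scaleC: "scaleC a (scaleC b x) = scaleC (a * b) x"
    and scaleC_one: "scaleC 1 x = x"
    and norm_scaleC: "norm (scaleC a x) = cmod a * norm x"

definition csubspace :: "'x::complex_banach set \<Rightarrow> bool" where
  "csubspace S \<longleftrightarrow> 0 \<in> S \<and> (\<forall>x\<in>S. \<forall>y\<in>S. x + y \<in> S)
     \<and> (\<forall>a. \<forall>x\<in>S. scaleC a x \<in> S)"

definition clinear_on :: "'x::complex_banach set \<Rightarrow> ('x \<Rightarrow> 'y::complex_banach) \<Rightarrow> bool" where
  "clinear_on S T \<longleftrightarrow> (\<forall>x\<in>S. \<forall>y\<in>S. T (x + y) = T x + T y)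
     \<and> (\<forall>a. \<forall>x\<in>S. T (scaleC a x) = scaleC a (T x))"

definition bounded_cop :: "('x::complex_banach \<Rightarrow> 'x) \<Rightarrow> bool" where
  "bounded_cop T \<longleftrightarrow> clinear_on UNIV T \<and> (\<exists>K. \<forall>x. norm (T x) \<le> K * norm x)"

definition op_graph :: "'x set \<Rightarrow> ('x \<Rightarrow> 'y) \<Rightarrow> ('x \<times> 'y) set" where
  "op_graph S T = {(x, T x) | x. x \<in> S}"

definition is_graph :: "('x \<times> 'y) set \<Rightarrow> bool" where
  "is_graph G \<longleftrightarrow> (\<forall>x y z. (x, y) \<in> G \<and> (x, z) \<in> G \<longrightarrow> y = z)"

definition closable :: "'x::topological_space set \<Rightarrow> ('x \<Rightarrow> 'y::topological_space) \<Rightarrow> bool" where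
  "closable S T \<longleftrightarrow> is_graph (closure (op_graph S T))"

text \<open>The closure of a (closable) operator: the operator whose graph is the closure of the graph.
  Its domain is \<open>fst ` closure (op_graph S T)\<close>.\<close>
definition op_closure :: "'x::topological_space set \<Rightarrow> ('x \<Rightarrow> 'y::topological_space) \<Rightarrow> 'x \<Rightarrow> 'y" where
  "op_closure S T x = (THE y. (x, y) \<in> closure (op_graph S T))"

definition tuple_graph :: "'x set \<Rightarrow> ('n::finite \<Rightarrow> 'x \<Rightarrow> 'x) \<Rightarrow> ('x \<times> ('x ^ 'n)) set" where
  "tuple_graph S c = {(x, \<chi> j. c j x) | x. x \<in> S}"

definition tuple_closable :: "'x::topological_space set \<Rightarrow> ('n::finite \<Rightarrow> 'x \<Rightarrow> 'x) \<Rightarrow> bool" where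
  "tuple_closable S c \<longleftrightarrow> is_graph (closure (tuple_graph S c))"

definition partial :: "'n::finite \<Rightarrow> (real ^ 'n \<Rightarrow> complex) \<Rightarrow> real ^ 'n \<Rightarrow> complex" where
  "partial i f x = vector_derivative (\<lambda>t. f (x + t *\<^sub>R axis i 1)) (at 0)"

fun dpart :: "'n::finite list \<Rightarrow> (real ^ 'n \<Rightarrow> complex) \<Rightarrow> real ^ 'n \<Rightarrow> complex" where
  "dpart [] f = f"
| "dpart (i # is) f = partial i (dpart is f)"

definition smooth :: "(real ^ 'n::finite \<Rightarrow> complex) \<Rightarrow> bool" where
  "smooth f \<longleftrightarrow> (\<forall>is. continuous_on UNIV (dpart is f)
      \<and> (\<forall>i x. (\<lambda>t. dpart is f (x + t *\<^sub>R axis i 1)) differentiable (at 0)))"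

definition tsupport :: "(real ^ 'n::finite \<Rightarrow> complex) \<Rightarrow> (real ^ 'n) set" where
  "tsupport f = closure {x. f x \<noteq> 0}"

definition test_fun :: "(real ^ 'n::finite \<Rightarrow> complex) \<Rightarrow> bool" where
  "test_fun f \<longleftrightarrow> smooth f \<and> compact (tsupport f)"

definition conv_E :: "(nat \<Rightarrow> real ^ 'n::finite \<Rightarrow> complex) \<Rightarrow> (real ^ 'n \<Rightarrow> complex) \<Rightarrow> bool" where
  "conv_E h g \<longleftrightarrow> (\<forall>is K. compact K \<longrightarrow>
      uniform_limit K (\<lambda>k. dpart is (h k)) (dpart is g) sequentially)"

definition conv_D0 :: "(nat \<Rightarrow> real ^ 'n::finite \<Rightarrow> complex) \<Rightarrow> bool" where
  "conv_D0 \<phi> \<longleftrightarrow> (\<exists>K. compact K \<and> (\<forall>j. tsupport (\<phi> j) \<subseteq> K))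
      \<and> (\<forall>is. uniform_limit UNIV (\<lambda>j. dpart is (\<phi> j)) (\<lambda>_. 0) sequentially)"

definition coord :: "'n::finite \<Rightarrow> real ^ 'n \<Rightarrow> complex" where
  "coord j = (\<lambda>\<xi>. complex_of_real (\<xi> $ j))"

text \<open>\<open>hc h\<close> stands for \<open>h(c)\<close>. Polynomials are sent to the corresponding polynomial in
  \<open>c\<close>: by linearity and multiplicativity this is equivalent to sending the constant \<open>1\<close>
  to the identity on \<open>D\<close> and each coordinate function \<open>\<xi>_j\<close> to \<open>c_j\<close>.\<close>
definition weak_hyperop ::
  "('n::finite \<Rightarrow> 'x::complex_banach \<Rightarrow> 'x) \<Rightarrow> 'x set \<Rightarrow> ((real ^ 'n \<Rightarrow> complex) \<Rightarrow> 'x \<Rightarrow> 'x) \<Rightarrow> bool"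
  where
  "weak_hyperop c D hc \<longleftrightarrow>
     csubspace D \<and> closure D = UNIV
   \<and> (\<forall>j. (\<forall>x\<in>D. c j x \<in> D) \<and> clinear_on D (c j))
   \<and> tuple_closable D c
   \<and> (\<forall>h. smooth h \<longrightarrow> (\<forall>x\<in>D. hc h x \<in> D) \<and> clinear_on D (hc h) \<and> closable D (hc h))
   \<and> (\<forall>h g. smooth h \<longrightarrow> smooth g \<longrightarrow> (\<forall>x\<in>D. hc (\<lambda>\<xi>. h \<xi> + g \<xi>) x = hc h x + hc g x))
   \<and> (\<forall>h a. smooth h \<longrightarrow> (\<forall>x\<in>D. hc (\<lambda>\<xi>. a * h \<xi>) x = scaleC a (hc h x)))
   \<and> (\<forall>h g. smooth h \<longrightarrow> smooth g \<longrightarrow> (\<forall>x\<in>D. hc (\<lambda>\<xi>. h \<xi> * g \<xi>) x = hc h (hc g x)))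
   \<and> (\<forall>x\<in>D. hc (\<lambda>_. 1) x = x)
   \<and> (\<forall>j. \<forall>x\<in>D. hc (coord j) x = c j x)
   \<and> (\<forall>hs h. (\<forall>k. smooth (hs k)) \<longrightarrow> smooth h \<longrightarrow> conv_E hs h \<longrightarrow>
          (\<forall>x\<in>D. (\<lambda>k. hc (hs k) x) \<longlonglongrightarrow> hc h x))"

definition hyperop :: "((real ^ 'n::finite \<Rightarrow> complex) \<Rightarrow> 'x::complex_banach \<Rightarrow> 'x) \<Rightarrow> bool" where
  "hyperop A \<longleftrightarrow>
     (\<forall>\<phi>. test_fun \<phi> \<longrightarrow> bounded_cop (A \<phi>))
   \<and> (\<forall>\<phi> \<psi>. test_fun \<phi> \<longrightarrow> test_fun \<psi> \<longrightarrow> A (\<lambda>\<xi>. \<phi> \<xi> + \<psi> \<xi>) = (\<lambda>x. A \<phi> x + A \<psi> x))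
   \<and> (\<forall>\<phi> a. test_fun \<phi> \<longrightarrow> A (\<lambda>\<xi>. a * \<phi> \<xi>) = (\<lambda>x. scaleC a (A \<phi> x)))
   \<and> (\<forall>\<phi>s. (\<forall>j. test_fun (\<phi>s j)) \<longrightarrow> conv_D0 \<phi>s \<longrightarrow> (\<lambda>j. onorm (A (\<phi>s j))) \<longlonglongrightarrow> 0)
   \<and> (\<forall>\<phi> \<psi>. test_fun \<phi> \<longrightarrow> test_fun \<psi> \<longrightarrow> A (\<lambda>\<xi>. \<phi> \<xi> * \<psi> \<xi>) = A \<phi> \<circ> A \<psi>)
   \<and> closure (\<Union>\<phi>\<in>{\<phi>. test_fun \<phi>}. range (A \<phi>)) = UNIV
   \<and> (\<forall>x. (\<forall>\<phi>. test_fun \<phi> \<longrightarrow> A \<phi> x = 0) \<longrightarrow> x = 0)"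

definition hyper_dom :: "((real ^ 'n::finite \<Rightarrow> complex) \<Rightarrow> 'x \<Rightarrow> 'x) \<Rightarrow> 'x set" where
  "hyper_dom A = (\<Union>\<phi>\<in>{\<phi>. test_fun \<phi>}. range (A \<phi>))"

text \<open>The associated tuple \<open>a'\<close>: \<open>a'_j x = A(\<xi>_j \<phi>) y\<close> whenever \<open>x = A(\<phi>) y\<close>
  (well defined for a hyperoperator).\<close>
definition assoc_tuple :: "((real ^ 'n::finite \<Rightarrow> complex) \<Rightarrow> 'x \<Rightarrow> 'x) \<Rightarrow> 'n \<Rightarrow> 'x \<Rightarrow> 'x" where
  "assoc_tuple A j x = (SOME z. \<exists>\<phi> y. test_fun \<phi> \<and> x = A \<phi> y \<and> z = A (\<lambda>\<xi>. coord j \<xi> * \<phi> \<xi>) y)"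

end

theory Submission
  imports Defs "HOL-Computational_Algebra.Polynomial"
begin

text \<open>On \<open>D\<close> the operator \<open>A(\<phi>)\<close> agrees with \<open>\<phi>(a)\<close>, so by density and continuity \<open>A\<close>
  inherits linearity and multiplicativity from \<open>h \<mapsto> h(a)\<close>. Continuity of
  \<open>A : \<D>(\<real>^n) \<rightarrow> L(X)\<close> is a gliding hump argument: the closures are bounded individually and
  \<open>A(\<phi>\<^sub>j) x \<rightarrow> 0\<close> for \<open>x \<in> D\<close> along a null sequence, and if \<open>\<parallel>A(\<phi>\<^sub>j)\<parallel>\<close> stayed away
  from \<open>0\<close> one could sum a rapidly convergent series \<open>\<Psi> = \<Sum>\<^sub>m C\<^sub>m \<phi>\<^bsub>N\<^sub>m\<^esub>\<close> in \<open>\<D>(\<real>^n)\<close>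
  for which \<open>A(\<Psi>)\<close> is unbounded. Continuity of \<open>h \<mapsto> h(a) x\<close> in \<open>\<E>(\<real>^n)\<close> also shows that
  \<open>h(a) x = 0\<close> whenever \<open>h\<close> vanishes on a large ball; writing \<open>1 = (\<psi> + q) / (\<psi> + q)\<close> with a
  test function \<open>\<psi>\<close> and \<open>q\<close> vanishing on that ball then exhibits \<open>x\<close> as \<open>\<psi>(a) y\<close>, whence
  \<open>D \<subseteq> D\<^sub>A\<close>. Finally \<open>a'\<close> extends \<open>a\<close> and its graph lies in the closure of the graph of
  \<open>a\<close>, since \<open>a' (A(\<phi>) y) = (A(\<xi>\<^sub>j \<phi>) y)\<^sub>j\<close> is the limit of \<open>a (\<phi>(a) s\<^sub>n)\<close> for \<open>s\<^sub>n \<rightarrow> y\<close>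
  in \<open>D\<close>.\<close>

section \<open>Smooth functions\<close>

abbreviation along_axis :: "(real^'n::finite \<Rightarrow> complex) \<Rightarrow> real^'n \<Rightarrow> 'n \<Rightarrow> real \<Rightarrow> complex" where
  "along_axis f x i \<equiv> (\<lambda>t. f (x + t *\<^sub>R axis i 1))"

text \<open>Smoothness is proved by exhibiting an algebra of continuous functions that is closed under
  partial differentiation; the algebra below is closed under inversion of nowhere vanishing
  elements, so it suffices that its generators have partial derivatives in it.\<close>

inductive_set algebra_inv :: "(real^'n::finite \<Rightarrow> complex) set \<Rightarrow> (real^'n \<Rightarrow> complex) set"
  for B where
  algebra_inv_base: "b \<in> B \<Longrightarrow> b \<in> algebra_inv B"
| algebra_inv_const: "(\<lambda>_. c) \<in> algebra_inv B"
| algebra_inv_add: "f \<in> algebra_inv B \<Longrightarrow> g \<in> algebra_inv B \<Longrightarrow> (\<lambda>x. f x + g x) \<in> algebra_inv B"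
| algebra_inv_mult: "f \<in> algebra_inv B \<Longrightarrow> g \<in> algebra_inv B \<Longrightarrow> (\<lambda>x. f x * g x) \<in> algebra_inv B"
| algebra_inv_inverse: "f \<in> algebra_inv B \<Longrightarrow> (\<forall>x. f x \<noteq> 0) \<Longrightarrow> (\<lambda>x. inverse (f x)) \<in> algebra_inv B"

definition partials_in :: "(real^'n::finite \<Rightarrow> complex) set \<Rightarrow> (real^'n \<Rightarrow> complex) \<Rightarrow> bool" where
  "partials_in S f \<longleftrightarrow> continuous_on UNIV f \<and>
     (\<forall>i. \<exists>g\<in>S. \<forall>x. (along_axis f x i has_vector_derivative g x) (at 0))"

lemma partials_in_add:
  assumes "partials_in S f" "partials_in S g" "\<And>f g. f \<in> S \<Longrightarrow> g \<in> S \<Longrightarrow> (\<lambda>x. f x + g x) \<in> S"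
  shows "partials_in S (\<lambda>x. f x + g x)"
  unfolding partials_in_def
proof safe
  show "continuous_on UNIV (\<lambda>x. f x + g x)"
    using assms(1,2) by (auto simp: partials_in_def intro: continuous_intros)
  fix i
  obtain f' g' where "f' \<in> S" "\<And>x. (along_axis f x i has_vector_derivative f' x) (at 0)"
    "g' \<in> S" "\<And>x. (along_axis g x i has_vector_derivative g' x) (at 0)"
    using assms(1,2) unfolding partials_in_def by metis
  with assms(3) show "\<exists>h\<in>S. \<forall>x. (along_axis (\<lambda>x. f x + g x) x i has_vector_derivative h x) (at 0)"
    by (intro bexI[of _ "\<lambda>x. f' x + g' x"]) (auto intro!: has_vector_derivative_add)
qed

lemma partials_in_mult:
  assumes "partials_in S f" "partials_in S g" "f \<in> S" "g \<in> S"
    and closed: "\<And>f g. f \<in> S \<Longrightarrow> g \<in> S \<Longrightarrow> (\<lambda>x. f x + g x) \<in> S"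
      "\<And>f g. f \<in> S \<Longrightarrow> g \<in> S \<Longrightarrow> (\<lambda>x. f x * g x) \<in> S"
  shows "partials_in S (\<lambda>x. f x * g x)"
  unfolding partials_in_def
proof safe
  show "continuous_on UNIV (\<lambda>x. f x * g x)"
    using assms(1,2) by (auto simp: partials_in_def intro: continuous_intros)
  fix i
  obtain f' g' where f': "f' \<in> S" "\<And>x. (along_axis f x i has_vector_derivative f' x) (at 0)"
    and g': "g' \<in> S" "\<And>x. (along_axis g x i has_vector_derivative g' x) (at 0)"
    using assms(1,2) unfolding partials_in_def by metis
  have "(along_axis (\<lambda>x. f x * g x) x i has_vector_derivative f x * g' x + f' x * g x) (at 0)" for x
    using has_vector_derivative_mult[OF f'(2) g'(2)] by simp
  moreover have "(\<lambda>x. f x * g' x + f' x * g x) \<in> S"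
    using f'(1) g'(1) assms(3,4) by (intro closed)
  ultimately show "\<exists>h\<in>S. \<forall>x. (along_axis (\<lambda>x. f x * g x) x i has_vector_derivative h x) (at 0)"
    by (intro bexI[of _ "\<lambda>x. f x * g' x + f' x * g x"]) auto
qed

lemma partials_in_inverse:
  assumes "partials_in S f" "f \<in> S" "\<forall>x. f x \<noteq> 0"
    and closed: "\<And>c. (\<lambda>_. c) \<in> S" "\<And>f g. f \<in> S \<Longrightarrow> g \<in> S \<Longrightarrow> (\<lambda>x. f x * g x) \<in> S"
      "(\<lambda>x. inverse (f x)) \<in> S"
  shows "partials_in S (\<lambda>x. inverse (f x))"
  unfolding partials_in_def
proof safe
  let ?inv = "\<lambda>x. inverse (f x)"
  show "continuous_on UNIV ?inv"
    using assms(1,3) by (auto simp: partials_in_def intro: continuous_intros)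
  fix i
  obtain f' where f': "f' \<in> S" "\<And>x. (along_axis f x i has_vector_derivative f' x) (at 0)"
    using assms(1) unfolding partials_in_def by metis
  have "(along_axis ?inv x i has_vector_derivative - (f' x * (?inv x * ?inv x))) (at 0)" for x
  proof -
    have "(inverse has_field_derivative - (inverse (f x) * 1 * inverse (f x))) (at (along_axis f x i 0))"
      using DERIV_inverse'[OF DERIV_ident, of "f x" UNIV] assms(3) by simp
    from field_vector_diff_chain_at[OF f'(2)[of x] this] show ?thesis
      by (simp add: o_def)
  qed
  moreover have "(\<lambda>x. (\<lambda>_. -1) x * (f' x * (?inv x * ?inv x))) \<in> S"
    using f'(1) by (intro closed)
  ultimately show "\<exists>h\<in>S. \<forall>x. (along_axis ?inv x i has_vector_derivative h x) (at 0)"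
    by (intro bexI[of _ "\<lambda>x. - (f' x * (?inv x * ?inv x))"]) auto
qed

lemma partials_in_algebra_inv:
  assumes gen: "\<And>b. b \<in> B \<Longrightarrow> partials_in (algebra_inv B) b"
    and f: "f \<in> algebra_inv B"
  shows "partials_in (algebra_inv B) f"
  using f
proof induction
  case (algebra_inv_const c)
  then show ?case
    by (auto simp: partials_in_def intro!: bexI[of _ "\<lambda>_. 0"] algebra_inv.algebra_inv_const)
next
  case (algebra_inv_add f g)
  then show ?case by (intro partials_in_add algebra_inv.algebra_inv_add)
next
  case (algebra_inv_mult f g)
  then show ?case
    by (intro partials_in_mult algebra_inv.algebra_inv_add algebra_inv.algebra_inv_mult)
next
  case (algebra_inv_inverse f)
  then show ?case
    by (intro partials_in_inverse algebra_inv.algebra_inv_mult algebra_inv.algebra_inv_const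
        algebra_inv.algebra_inv_inverse)
qed (use gen in blast)

lemma smooth_algebra_inv:
  assumes gen: "\<And>b. b \<in> B \<Longrightarrow> partials_in (algebra_inv B) b"
    and f: "f \<in> algebra_inv B"
  shows "smooth f"
proof -
  have dpart_mem: "dpart ds f \<in> algebra_inv B" for ds
  proof (induction ds)
    case Nil
    then show ?case using f by simp
  next
    case (Cons i ds)
    obtain g where g: "g \<in> algebra_inv B" "\<And>x. (along_axis (dpart ds f) x i has_vector_derivative g x) (at 0)"
      using partials_in_algebra_inv[OF gen Cons] unfolding partials_in_def by blast
    have "dpart (i # ds) f = g"
      by (auto simp: fun_eq_iff partial_def vector_derivative_at[OF g(2)])
    then show ?case using g by simp
  qed
  show ?thesis
    using partials_in_algebra_inv[OF gen dpart_mem]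
    unfolding smooth_def partials_in_def differentiable_def has_vector_derivative_def by blast
qed

lemma smooth_has_vector_derivative:
  assumes "smooth f"
  shows "(along_axis (dpart ds f) x i has_vector_derivative dpart (i # ds) f x) (at 0)"
  using assms by (simp add: smooth_def partial_def vector_derivative_works[THEN iffD1])

lemma smooth_in_algebra_inv_derivatives:
  assumes F: "\<And>f. f \<in> F \<Longrightarrow> smooth f"
    and h: "h \<in> algebra_inv (\<Union>f\<in>F. range (\<lambda>ds. dpart ds f))"
  shows "smooth h"
proof (rule smooth_algebra_inv[OF _ h])
  fix b assume "b \<in> (\<Union>f\<in>F. range (\<lambda>ds. dpart ds f))"
  then obtain f ds where f: "f \<in> F" and b: "b = dpart ds f" by blast
  show "partials_in (algebra_inv (\<Union>f\<in>F. range (\<lambda>ds. dpart ds f))) b"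
    unfolding partials_in_def b
  proof (intro conjI allI)
    show "continuous_on UNIV (dpart ds f)" using F[OF f] by (simp add: smooth_def)
    fix i
    have "dpart (i # ds) f \<in> algebra_inv (\<Union>f\<in>F. range (\<lambda>ds. dpart ds f))"
      using f by (intro algebra_inv_base) blast
    then show "\<exists>g\<in>algebra_inv (\<Union>f\<in>F. range (\<lambda>ds. dpart ds f)).
        \<forall>x. (along_axis (dpart ds f) x i has_vector_derivative g x) (at 0)"
      by (intro bexI[of _ "dpart (i # ds) f"] allI smooth_has_vector_derivative[OF F[OF f]])
  qed
qed

lemma algebra_inv_dpart_Nil: "f \<in> F \<Longrightarrow> f \<in> algebra_inv (\<Union>f\<in>F. range (\<lambda>ds. dpart ds f))"
  by (intro algebra_inv_base UN_I range_eqI[of _ _ "[]"]) simp_all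

lemma smooth_const: "smooth (\<lambda>_. c)"
  by (rule smooth_in_algebra_inv_derivatives[of "{}"]) (simp_all add: algebra_inv_const)

lemma smooth_add:
  assumes "smooth f" "smooth g"
  shows "smooth (\<lambda>x. f x + g x)"
proof (rule smooth_in_algebra_inv_derivatives[of "{f, g}"])
  show "(\<lambda>x. f x + g x) \<in> algebra_inv (\<Union>f\<in>{f, g}. range (\<lambda>ds. dpart ds f))"
    by (rule algebra_inv_add; rule algebra_inv_dpart_Nil) simp_all
qed (use assms in blast)

lemma smooth_mult:
  assumes "smooth f" "smooth g"
  shows "smooth (\<lambda>x. f x * g x)"
proof (rule smooth_in_algebra_inv_derivatives[of "{f, g}"])
  show "(\<lambda>x. f x * g x) \<in> algebra_inv (\<Union>f\<in>{f, g}. range (\<lambda>ds. dpart ds f))"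
    by (rule algebra_inv_mult; rule algebra_inv_dpart_Nil) simp_all
qed (use assms in blast)

lemma smooth_cmult: "smooth f \<Longrightarrow> smooth (\<lambda>x. a * f x)"
  using smooth_mult[OF smooth_const] .

lemma smooth_sum: "(\<And>m. smooth (f m)) \<Longrightarrow> smooth (\<lambda>x. \<Sum>m<(N::nat). f m x)"
  by (induction N) (simp_all add: smooth_const smooth_add)

lemma dpart_const: "dpart ds (\<lambda>_. c) = (\<lambda>_. if ds = [] then c else 0)"
  by (induction ds) (simp_all add: partial_def fun_eq_iff vector_derivative_at[OF has_vector_derivative_const])

lemma dpart_add:
  assumes "smooth f" "smooth g"
  shows "dpart ds (\<lambda>x. f x + g x) = (\<lambda>x. dpart ds f x + dpart ds g x)"
proof (induction ds)
  case (Cons i ds)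
  have "(along_axis (\<lambda>x. dpart ds f x + dpart ds g x) x i has_vector_derivative
      dpart (i # ds) f x + dpart (i # ds) g x) (at 0)" for x
    using assms by (intro has_vector_derivative_add smooth_has_vector_derivative)
  then show ?case by (simp add: Cons fun_eq_iff partial_def vector_derivative_at)
qed simp

lemma dpart_cmult:
  assumes "smooth f"
  shows "dpart ds (\<lambda>x. a * f x) = (\<lambda>x. a * dpart ds f x)"
proof (induction ds)
  case (Cons i ds)
  have "(along_axis (\<lambda>x. a * dpart ds f x) x i has_vector_derivative a * dpart (i # ds) f x) (at 0)" for x
    using assms by (intro has_vector_derivative_mult_right smooth_has_vector_derivative)
  then show ?case by (simp add: Cons fun_eq_iff partial_def vector_derivative_at)
qed simp

lemma dpart_sum:
  assumes "\<And>m. smooth (f m)"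
  shows "dpart ds (\<lambda>x. \<Sum>m<(N::nat). f m x) = (\<lambda>x. \<Sum>m<N. dpart ds (f m) x)"
  by (induction N) (simp_all add: dpart_const dpart_add smooth_sum assms)

lemma has_vector_derivative_along_axis_shift:
  assumes "(along_axis h (x + t *\<^sub>R axis i 1) i has_vector_derivative D) (at 0)"
  shows "(along_axis h x i has_vector_derivative D) (at t)"
proof -
  have eq: "along_axis h x i = along_axis h (x + t *\<^sub>R axis i 1) i \<circ> (\<lambda>s. s - t)"
    by (auto simp: fun_eq_iff algebra_simps)
  have "((\<lambda>s. s - t) has_vector_derivative 1) (at t)"
    by (auto intro!: derivative_eq_intros)
  from vector_diff_chain_at[OF this, of "along_axis h (x + t *\<^sub>R axis i 1) i" D] assms
  show ?thesis unfolding eq by simp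
qed

lemma has_vector_derivative_along_axis_uniform_limit:
  assumes sm: "\<And>N. smooth (F N)"
    and ul: "\<And>ds. uniform_limit UNIV (\<lambda>N. dpart ds (F N)) (G ds) sequentially"
  shows "(along_axis (G ds) x i has_vector_derivative G (i # ds) x) (at 0)"
proof -
  let ?y = "\<lambda>t. x + t *\<^sub>R axis i 1"
  have deriv: "(along_axis (dpart ds (F N)) x i has_derivative
      (\<lambda>h. h *\<^sub>R dpart (i # ds) (F N) (?y t))) (at t within UNIV)" for N t
    using has_vector_derivative_along_axis_shift[OF smooth_has_vector_derivative[OF sm]]
    by (simp add: has_vector_derivative_def)
  have deriv_conv: "\<forall>\<^sub>F N in sequentially. \<forall>t\<in>UNIV. \<forall>h. norm (h *\<^sub>R dpart (i # ds) (F N) (?y t)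
      - h *\<^sub>R G (i # ds) (?y t)) \<le> e * norm h" if "e > 0" for e
    using uniform_limitD[OF ul that, of "i # ds"]
  proof eventually_elim
    case (elim N)
    have "\<bar>h\<bar> * dist (dpart (i # ds) (F N) (?y t)) (G (i # ds) (?y t)) \<le> \<bar>h\<bar> * e" for t h
      using elim by (intro mult_left_mono) (auto intro: less_imp_le)
    then show ?case
      by (simp add: dist_norm mult.commute flip: scaleR_diff_right)
  qed
  have "(\<lambda>N. dpart ds (F N) (?y 0)) \<longlonglongrightarrow> G ds (?y 0)"
    using tendsto_uniform_limitI[OF ul] by blast
  from has_derivative_sequence[OF convex_UNIV deriv deriv_conv UNIV_I this]
  obtain g where g: "\<And>t. (\<lambda>N. dpart ds (F N) (?y t)) \<longlonglongrightarrow> g t"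
      "\<And>t. (g has_derivative (\<lambda>h. h *\<^sub>R G (i # ds) (?y t))) (at t)"
    by auto
  have "g = along_axis (G ds) x i"
    using LIMSEQ_unique[OF g(1) tendsto_uniform_limitI[OF ul]] by auto
  then show ?thesis using g(2)[of 0] by (simp add: has_vector_derivative_def)
qed

lemma
  assumes sm: "\<And>N. smooth (F N)"
    and ul: "\<And>ds. uniform_limit UNIV (\<lambda>N. dpart ds (F N)) (G ds) sequentially"
  shows dpart_uniform_limit: "dpart ds (G []) = G ds"
    and smooth_uniform_limit: "smooth (G [])"
proof -
  have dpart_eq: "dpart ds (G []) = G ds" for ds
    by (induction ds) (auto simp: fun_eq_iff partial_def
        vector_derivative_at[OF has_vector_derivative_along_axis_uniform_limit[OF sm ul]])
  then show "dpart ds (G []) = G ds" .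
  show "smooth (G [])" unfolding smooth_def dpart_eq
  proof safe
    show "continuous_on UNIV (G ds)" for ds
      by (rule uniform_limit_theorem[OF _ ul]) (use sm in \<open>auto simp: smooth_def\<close>)
    show "along_axis (G ds) x i differentiable at 0" for ds x i
      using has_vector_derivative_along_axis_uniform_limit[OF sm ul]
      by (auto simp: differentiable_def has_vector_derivative_def)
  qed
qed

lemma
  assumes sm: "\<And>m. smooth (f m)"
    and bound: "\<And>ds. \<exists>M. summable M \<and> (\<forall>\<^sub>F m in sequentially. \<forall>x. norm (dpart ds (f m) x) \<le> M m)"
  shows smooth_suminf: "smooth (\<lambda>x. \<Sum>m. f m x)"
    and dpart_sum_uniform_limit: "uniform_limit UNIV (\<lambda>N. dpart ds (\<lambda>x. \<Sum>m<N. f m x))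
                                   (dpart ds (\<lambda>x. \<Sum>m. f m x)) sequentially"
proof -
  have ul: "uniform_limit UNIV (\<lambda>N. dpart ds (\<lambda>x. \<Sum>m<N. f m x)) (\<lambda>x. \<Sum>m. dpart ds (f m) x)
      sequentially" for ds
  proof -
    obtain M where "summable M" "\<forall>\<^sub>F m in sequentially. \<forall>x. norm (dpart ds (f m) x) \<le> M m"
      using bound by blast
    then show ?thesis unfolding dpart_sum[OF sm] by (intro Weierstrass_m_test_ev) auto
  qed
  have sm_sum: "smooth (\<lambda>x. \<Sum>m<N. f m x)" for N by (rule smooth_sum[OF sm])
  show "smooth (\<lambda>x. \<Sum>m. f m x)" using smooth_uniform_limit[OF sm_sum ul] by simp
  show "uniform_limit UNIV (\<lambda>N. dpart ds (\<lambda>x. \<Sum>m<N. f m x)) (dpart ds (\<lambda>x. \<Sum>m. f m x)) sequentially"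
    using ul dpart_uniform_limit[OF sm_sum ul] by simp
qed

section \<open>Bump functions\<close>

text \<open>\<open>flat_fun k\<close> is the \<open>k\<close>-th derivative of the function that is \<open>exp (-1/t)\<close> for \<open>t > 0\<close>
  and \<open>0\<close> for \<open>t \<le> 0\<close>; differentiating \<open>p (1/t) * exp (-1/t)\<close> gives the recursion for
  \<open>flat_poly\<close>.\<close>

fun flat_poly :: "nat \<Rightarrow> real poly" where
  "flat_poly 0 = 1"
| "flat_poly (Suc k) = [:0, 0, 1:] * (flat_poly k - pderiv (flat_poly k))"

definition flat_fun :: "nat \<Rightarrow> real \<Rightarrow> real" where
  "flat_fun k t = (if t > 0 then poly (flat_poly k) (1/t) * exp (-(1/t)) else 0)"

lemma poly_times_exp_minus_tendsto_0: "((\<lambda>u. poly (p :: real poly) u * u * exp (-u)) \<longlongrightarrow> 0) at_top"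
proof -
  have eq: "poly p u * u * exp (-u) = (\<Sum>i\<le>degree p. coeff p i * (u ^ Suc i / exp u))" for u :: real
    by (simp add: poly_altdef sum_distrib_left exp_minus divide_inverse mult_ac)
  have "((\<lambda>u. \<Sum>i\<le>degree p. coeff p i * (u ^ Suc i / exp u)) \<longlongrightarrow> (\<Sum>i\<le>degree p. coeff p i * 0)) at_top"
    by (intro tendsto_sum tendsto_mult tendsto_const tendsto_power_div_exp_0)
  then show ?thesis unfolding eq by simp
qed

lemma flat_fun_has_derivative_at_0: "(flat_fun k has_real_derivative 0) (at 0)"
proof -
  have "((\<lambda>u. (flat_fun k (inverse u) - flat_fun k 0) / (inverse u - 0)) \<longlongrightarrow> 0) at_top"
  proof (rule Lim_transform_eventually[OF poly_times_exp_minus_tendsto_0])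
    show "\<forall>\<^sub>F u in at_top. poly (flat_poly k) u * u * exp (- u)
        = (flat_fun k (inverse u) - flat_fun k 0) / (inverse u - 0)"
      using eventually_gt_at_top[of 0] by eventually_elim (simp add: flat_fun_def field_simps)
  qed
  then have right: "((\<lambda>t. (flat_fun k t - flat_fun k 0) / (t - 0)) \<longlongrightarrow> 0) (at_right 0)"
    by (simp add: filterlim_at_right_to_top)
  have left: "((\<lambda>t. (flat_fun k t - flat_fun k 0) / (t - 0)) \<longlongrightarrow> 0) (at_left 0)"
  proof (rule Lim_transform_eventually[OF tendsto_const])
    show "\<forall>\<^sub>F t in at_left 0. 0 = (flat_fun k t - flat_fun k 0) / (t - 0)"
      unfolding eventually_at_left_field by (auto intro!: exI[of _ "-1"] simp: flat_fun_def)
  qed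
  show ?thesis unfolding has_field_derivative_iff using left right by (simp add: filterlim_at_split)
qed

lemma flat_fun_has_derivative: "(flat_fun k has_real_derivative flat_fun (Suc k) t) (at t)"
proof -
  consider "t = 0" | "t > 0" | "t < 0" by linarith
  then show ?thesis
  proof cases
    case 1
    then show ?thesis using flat_fun_has_derivative_at_0 by (simp add: flat_fun_def)
  next
    case 2
    have "((\<lambda>t. poly (flat_poly k) (1/t) * exp (-(1/t))) has_real_derivative
        poly (pderiv (flat_poly k)) (1/t) * (- (1/t^2)) * exp (-(1/t))
        + poly (flat_poly k) (1/t) * (exp (-(1/t)) * (1/t^2))) (at t)"
      using 2 by (auto intro!: derivative_eq_intros DERIV_chain2[OF poly_DERIV]
          simp: power2_eq_square field_simps)
    also have "poly (pderiv (flat_poly k)) (1/t) * (- (1/t^2)) * exp (-(1/t))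
        + poly (flat_poly k) (1/t) * (exp (-(1/t)) * (1/t^2)) = flat_fun (Suc k) t"
      using 2 by (simp add: flat_fun_def field_simps power2_eq_square)
    finally show ?thesis
      by (rule has_field_derivative_transform_within_open[where S="{0<..}"])
        (use 2 in \<open>auto simp: flat_fun_def\<close>)
  next
    case 3
    have "(flat_fun k has_real_derivative 0) (at t)"
      by (rule has_field_derivative_transform_within_open[OF DERIV_const, where S="{..<0}"])
        (use 3 in \<open>auto simp: flat_fun_def\<close>)
    then show ?thesis using 3 by (simp add: flat_fun_def)
  qed
qed

lemma continuous_on_flat_fun: "continuous_on UNIV (flat_fun k)"
  by (rule continuous_at_imp_continuous_on) (auto intro: DERIV_isCont[OF flat_fun_has_derivative])

lemma flat_fun_nonneg: "flat_fun 0 t \<ge> 0"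
  and flat_fun_pos: "t > 0 \<Longrightarrow> flat_fun 0 t > 0"
  by (auto simp: flat_fun_def)

lemma flat_fun_sum_pos:
  assumes "a < b"
  shows "0 < flat_fun 0 (b - t) + flat_fun 0 (t - a)"
proof (cases "t < b")
  case True
  then show ?thesis using flat_fun_pos[of "b - t"] flat_fun_nonneg[of "t - a"] by simp
next
  case False
  then show ?thesis using assms flat_fun_nonneg[of "b - t"] flat_fun_pos[of "t - a"] by simp
qed

definition radial_generators :: "(real^'n::finite \<Rightarrow> complex) set" where
  "radial_generators = range coord \<union> {(\<lambda>\<xi>. complex_of_real (flat_fun k (a + b * (\<xi> \<bullet> \<xi>)))) | k a b. True}"

lemma partials_in_coord: "partials_in (algebra_inv radial_generators) (coord j)"
  unfolding partials_in_def
proof (intro conjI allI)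
  show "continuous_on UNIV (coord j)" unfolding coord_def by (intro continuous_intros)
  fix i
  have "((\<lambda>t. x $ j + t * axis i 1 $ j) has_real_derivative axis i 1 $ j) (at 0)" for x :: "real^'a"
    by (auto intro!: derivative_eq_intros)
  then have "(along_axis (coord j) x i has_vector_derivative complex_of_real (axis i 1 $ j)) (at 0)" for x
    unfolding coord_def using has_vector_derivative_of_real by fastforce
  then show "\<exists>g\<in>algebra_inv radial_generators. \<forall>x. (along_axis (coord j) x i has_vector_derivative g x) (at 0)"
    by (intro bexI[of _ "\<lambda>_. complex_of_real (axis i 1 $ j)"] allI algebra_inv_const)
qed

lemma partials_in_flat_radial:
  "partials_in (algebra_inv radial_generators)
     (\<lambda>\<xi>::real^'n::finite. complex_of_real (flat_fun k (a + b * (\<xi> \<bullet> \<xi>))))"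
  unfolding partials_in_def
proof (intro conjI allI)
  show "continuous_on UNIV (\<lambda>\<xi>::real^'n. complex_of_real (flat_fun k (a + b * (\<xi> \<bullet> \<xi>))))"
    by (intro continuous_on_of_real continuous_on_compose2[OF continuous_on_flat_fun] continuous_intros) auto
  fix i :: 'n
  define g where
    "g \<xi> = complex_of_real (flat_fun (Suc k) (a + b * (\<xi> \<bullet> \<xi>))) * (complex_of_real (2 * b) * coord i \<xi>)"
    for \<xi> :: "real^'n"
  have "g \<in> algebra_inv radial_generators"
    unfolding g_def[abs_def]
    by (intro algebra_inv_mult algebra_inv_const algebra_inv_base) (auto simp: radial_generators_def)
  moreover have "(along_axis (\<lambda>\<xi>. complex_of_real (flat_fun k (a + b * (\<xi> \<bullet> \<xi>)))) x i
      has_vector_derivative g x) (at 0)" for x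
  proof -
    have inner: "(x + t *\<^sub>R axis i 1) \<bullet> (x + t *\<^sub>R axis i 1) = x \<bullet> x + 2 * t * x $ i + t^2" for t
      by (simp add: inner_add_left inner_add_right inner_axis inner_axis' inner_commute
          power2_eq_square algebra_simps)
    have "((\<lambda>t. a + b * (x \<bullet> x + 2 * t * x $ i + t^2)) has_real_derivative b * (2 * x $ i)) (at 0)"
      by (auto intro!: derivative_eq_intros)
    from DERIV_chain2[OF flat_fun_has_derivative this]
    have "((\<lambda>t. flat_fun k (a + b * (x \<bullet> x + 2 * t * x $ i + t^2))) has_real_derivative
        flat_fun (Suc k) (a + b * (x \<bullet> x)) * (b * (2 * x $ i))) (at 0)"
      by simp
    then have "((\<lambda>t. complex_of_real (flat_fun k (a + b * (x \<bullet> x + 2 * t * x $ i + t^2))))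
        has_vector_derivative
          complex_of_real (flat_fun (Suc k) (a + b * (x \<bullet> x)) * (b * (2 * x $ i)))) (at 0)"
      by (rule has_vector_derivative_of_real)
    moreover have "complex_of_real (flat_fun (Suc k) (a + b * (x \<bullet> x)) * (b * (2 * x $ i))) = g x"
      by (simp add: g_def coord_def)
    ultimately show ?thesis unfolding inner by simp
  qed
  ultimately show "\<exists>g\<in>algebra_inv radial_generators.
      \<forall>x. (along_axis (\<lambda>\<xi>. complex_of_real (flat_fun k (a + b * (\<xi> \<bullet> \<xi>)))) x i
        has_vector_derivative g x) (at 0)"
    by blast
qed

lemma smooth_radial_algebra: "f \<in> algebra_inv radial_generators \<Longrightarrow> smooth f"
proof (rule smooth_algebra_inv)
  fix b :: "real^'n \<Rightarrow> complex"
  assume "b \<in> radial_generators"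
  then consider j where "b = coord j"
    | k a c where "b = (\<lambda>\<xi>. complex_of_real (flat_fun k (a + c * (\<xi> \<bullet> \<xi>))))"
    unfolding radial_generators_def by blast
  then show "partials_in (algebra_inv radial_generators) b"
    by cases (simp_all add: partials_in_coord partials_in_flat_radial)
qed

lemma smooth_coord: "smooth (coord j)"
  by (rule smooth_radial_algebra, rule algebra_inv_base) (simp add: radial_generators_def)

lemma compact_tsupport_subset: "compact K \<Longrightarrow> tsupport f \<subseteq> K \<Longrightarrow> compact (tsupport f)"
  using compact_Int_closed[of K "tsupport f"] by (simp add: tsupport_def Int_absorb1)

lemma tsupport_flat_bump:
  assumes "r \<ge> 0"
  shows "tsupport (\<lambda>\<xi>::real^'n::finite. complex_of_real (flat_fun 0 (r^2 + (-1) * (\<xi> \<bullet> \<xi>)))) \<subseteq> cball 0 r"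
  unfolding tsupport_def
proof (intro closure_minimal subsetI)
  fix \<xi> :: "real^'n"
  assume "\<xi> \<in> {\<xi>. complex_of_real (flat_fun 0 (r^2 + (-1) * (\<xi> \<bullet> \<xi>))) \<noteq> 0}"
  then have "norm \<xi> ^ 2 < r^2"
    unfolding flat_fun_def by (auto simp: power2_norm_eq_inner split: if_splits)
  then have "norm \<xi> < r" using assms by (simp add: power_less_imp_less_base)
  then show "\<xi> \<in> cball 0 r" by simp
qed simp

lemma cutoff_pair_exists:
  fixes R :: real
  assumes "R \<ge> 0"
  obtains \<psi> q :: "real^'n::finite \<Rightarrow> complex"
  where "test_fun \<psi>" "smooth q" "\<And>\<xi>. norm \<xi> < R \<Longrightarrow> q \<xi> = 0"
    "\<And>\<xi>. \<psi> \<xi> + q \<xi> \<noteq> 0" "smooth (\<lambda>\<xi>. inverse (\<psi> \<xi> + q \<xi>))"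
proof -
  \<comment> \<open>both written in the shape \<open>a + b * (\<xi> \<bullet> \<xi>)\<close> of a radial generator\<close>
  define \<psi> where "\<psi> = (\<lambda>\<xi>::real^'n. complex_of_real (flat_fun 0 ((R + 1)^2 + (-1) * (\<xi> \<bullet> \<xi>))))"
  define q where "q = (\<lambda>\<xi>::real^'n. complex_of_real (flat_fun 0 (- (R^2) + 1 * (\<xi> \<bullet> \<xi>))))"
  have gen: "\<psi> \<in> algebra_inv radial_generators" "q \<in> algebra_inv radial_generators"
    unfolding \<psi>_def q_def radial_generators_def by (intro algebra_inv_base; blast)+
  have nonzero: "\<psi> \<xi> + q \<xi> \<noteq> 0" for \<xi>
  proof -
    have "R^2 < (R + 1)^2" using assms by (simp add: power2_eq_square algebra_simps)
    from flat_fun_sum_pos[OF this, of "\<xi> \<bullet> \<xi>"]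
    have "0 < flat_fun 0 ((R + 1)^2 + (-1) * (\<xi> \<bullet> \<xi>)) + flat_fun 0 (- (R^2) + 1 * (\<xi> \<bullet> \<xi>))"
      by (simp add: algebra_simps)
    then show ?thesis unfolding \<psi>_def q_def
      by (metis less_irrefl of_real_0 of_real_add of_real_eq_iff)
  qed
  have "compact (tsupport \<psi>)"
    using assms unfolding \<psi>_def by (intro compact_tsupport_subset[OF compact_cball tsupport_flat_bump]) simp
  then show ?thesis
  proof (intro that[of \<psi> q])
    show "test_fun \<psi>" "smooth q" "smooth (\<lambda>\<xi>. inverse (\<psi> \<xi> + q \<xi>))"
      using gen nonzero \<open>compact (tsupport \<psi>)\<close>
      by (auto simp: test_fun_def intro!: smooth_radial_algebra algebra_inv_inverse algebra_inv_add)
    show "q \<xi> = 0" if "norm \<xi> < R" for \<xi>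
    proof -
      have "norm \<xi> ^ 2 \<le> R^2" using that assms by (intro power_mono) auto
      then show ?thesis unfolding q_def flat_fun_def by (simp add: power2_norm_eq_inner)
    qed
  qed (use nonzero in auto)
qed

lemma smooth_test_fun: "test_fun \<phi> \<Longrightarrow> smooth \<phi>"
  by (simp add: test_fun_def)

lemma test_fun_mult:
  assumes "test_fun \<phi>" "smooth g"
  shows "test_fun (\<lambda>\<xi>. g \<xi> * \<phi> \<xi>)"
proof -
  have "tsupport (\<lambda>\<xi>. g \<xi> * \<phi> \<xi>) \<subseteq> tsupport \<phi>"
    unfolding tsupport_def by (intro closure_mono) auto
  then have "compact (tsupport (\<lambda>\<xi>. g \<xi> * \<phi> \<xi>))"
    using assms(1) by (intro compact_tsupport_subset[OF _ \<open>tsupport _ \<subseteq> tsupport \<phi>\<close>]) (simp add: test_fun_def)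
  then show ?thesis using assms by (simp add: test_fun_def smooth_mult)
qed

lemma test_fun_suminf:
  assumes sm: "\<And>m. smooth (f m)" and K: "compact K" "\<And>m. tsupport (f m) \<subseteq> K"
    and bound: "\<And>ds. \<exists>M. summable M \<and> (\<forall>\<^sub>F m in sequentially. \<forall>x. norm (dpart ds (f m) x) \<le> M m)"
  shows "test_fun (\<lambda>x. \<Sum>m. f m x)" and "conv_E (\<lambda>N x. \<Sum>m<N. f m x) (\<lambda>x. \<Sum>m. f m x)"
proof -
  have "f m x = 0" if "x \<notin> K" for m x
    using that K(2)[of m] closure_subset[of "{x. f m x \<noteq> 0}"] unfolding tsupport_def by blast
  then have "(\<Sum>m. f m x) = 0" if "x \<notin> K" for x
    using that by simp
  then have "tsupport (\<lambda>x. \<Sum>m. f m x) \<subseteq> K"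
    unfolding tsupport_def using compact_imp_closed[OF K(1)] by (intro closure_minimal) auto
  then show "test_fun (\<lambda>x. \<Sum>m. f m x)"
    using smooth_suminf[OF sm bound] compact_tsupport_subset[OF K(1)] by (simp add: test_fun_def)
  show "conv_E (\<lambda>N x. \<Sum>m<N. f m x) (\<lambda>x. \<Sum>m. f m x)"
    unfolding conv_E_def
    by (intro allI impI uniform_limit_on_subset[OF dpart_sum_uniform_limit[OF sm bound]]) simp
qed

lemma conv_D0_eventually_small:
  assumes "conv_D0 \<phi>s" "e > 0"
  shows "\<forall>\<^sub>F j in sequentially. \<forall>ds. length ds \<le> m \<longrightarrow> (\<forall>\<xi>. norm (dpart ds (\<phi>s j) \<xi>) \<le> e)"
proof -
  have "\<forall>ds\<in>{ds. set ds \<subseteq> UNIV \<and> length ds \<le> m}. \<forall>\<^sub>F j in sequentially. \<forall>\<xi>. norm (dpart ds (\<phi>s j) \<xi>) \<le> e"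
  proof
    fix ds
    have "uniform_limit UNIV (\<lambda>j. dpart ds (\<phi>s j)) (\<lambda>_. 0) sequentially"
      using assms(1) by (simp add: conv_D0_def)
    from uniform_limitD[OF this assms(2)]
    show "\<forall>\<^sub>F j in sequentially. \<forall>\<xi>. norm (dpart ds (\<phi>s j) \<xi>) \<le> e"
      by eventually_elim (simp add: less_imp_le)
  qed
  then have "\<forall>\<^sub>F j in sequentially. \<forall>ds\<in>{ds. set ds \<subseteq> UNIV \<and> length ds \<le> m}.
      \<forall>\<xi>. norm (dpart ds (\<phi>s j) \<xi>) \<le> e"
    by (intro eventually_ball_finite finite_lists_length_le) simp_all
  then show ?thesis by eventually_elim simp
qed

lemma scaleC_zero_left [simp]: "scaleC 0 (x::'x::complex_banach) = 0"
  using scaleC_of_real[of 0 x] by simp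

lemma subspace_csubspace: "csubspace D \<Longrightarrow> subspace D"
  unfolding csubspace_def subspace_def by (metis scaleC_of_real)

lemma clinear_on_zero: "clinear_on S T \<Longrightarrow> 0 \<in> S \<Longrightarrow> T 0 = 0"
  unfolding clinear_on_def by (metis add_0 add_cancel_right_right)

lemma bounded_cop_bounded_linear:
  assumes "bounded_cop T"
  shows "bounded_linear T"
proof -
  from assms obtain K where K: "\<And>x. norm (T x) \<le> K * norm x" and lin: "clinear_on UNIV T"
    unfolding bounded_cop_def by blast
  show ?thesis
  proof (rule bounded_linear_intro[where K=K])
    show "T (x + y) = T x + T y" for x y using lin by (simp add: clinear_on_def)
    show "T (r *\<^sub>R x) = r *\<^sub>R T x" for r x
      using lin unfolding clinear_on_def by (metis scaleC_of_real UNIV_I)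
    show "norm (T x) \<le> norm x * K" for x using K[of x] by (simp add: mult.commute)
  qed
qed

lemma bounded_linear_scaleC: "bounded_linear (scaleC a :: 'x::complex_banach \<Rightarrow> 'x)"
proof (rule bounded_linear_intro[where K="cmod a"])
  show "scaleC a (x + y) = scaleC a x + scaleC a y" for x y :: 'x by (rule scaleC_add_right)
  show "scaleC a (r *\<^sub>R x) = r *\<^sub>R scaleC a x" for r and x :: 'x
    by (metis scaleC_of_real scaleC_scaleC mult.commute)
  show "norm (scaleC a x) \<le> norm x * cmod a" for x :: 'x by (simp add: norm_scaleC mult.commute)
qed

lemma dense_subspace_onorm_witness:
  fixes T :: "'a::real_normed_vector \<Rightarrow> 'b::real_normed_vector"
  assumes T: "bounded_linear T" and D: "subspace D" "closure D = UNIV"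
    and e: "0 < e" "e \<le> onorm T"
  shows "\<exists>x\<in>D. norm x \<le> 1 \<and> e / 2 \<le> norm (T x)"
proof (rule ccontr)
  assume "\<not> ?thesis"
  then have small: "norm (T x) < e / 2" if "x \<in> D" "norm x \<le> 1" for x
    using that by force
  interpret bounded_linear T by fact
  have "norm (T x) \<le> e / 2 * norm x" if "x \<in> D" for x
  proof (cases "x = 0")
    case False
    have "(1 / norm x) *\<^sub>R x \<in> D" using D(1) that by (simp add: subspace_def)
    then have "norm (T ((1 / norm x) *\<^sub>R x)) < e / 2" using False by (intro small) simp_all
    then show ?thesis using False by (simp add: scale field_simps)
  qed (simp add: zero)
  moreover have "closed {x. norm (T x) \<le> e / 2 * norm x}"
    by (intro closed_Collect_le continuous_on_norm linear_continuous_on[OF T] continuous_intros)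
  ultimately have "norm (T x) \<le> e / 2 * norm x" for x
    using closure_minimal[of D "{x. norm (T x) \<le> e / 2 * norm x}"] D(2) by auto
  then have "onorm T \<le> e / 2" by (intro onorm_bound) (use e in auto)
  with e show False by simp
qed

lemma op_closure_continuous_extension:
  fixes f g :: "'a::metric_space \<Rightarrow> 'b::metric_space"
  assumes f: "continuous_on UNIV f" and D: "closure D = UNIV" and eq: "\<And>x. x \<in> D \<Longrightarrow> g x = f x"
  shows "op_closure D g = f"
proof -
  have closed: "closed (op_graph UNIV f)"
  proof -
    have "op_graph UNIV f = {p. snd p = f (fst p)}" by (auto simp: op_graph_def)
    moreover have "closed {p. snd p = f (fst p)}"
      by (intro closed_Collect_eq continuous_intros continuous_on_compose2[OF f]) auto
    ultimately show ?thesis by simp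
  qed
  have "op_graph UNIV f \<subseteq> closure (op_graph D g)"
  proof
    fix p assume "p \<in> op_graph UNIV f"
    then obtain x where p: "p = (x, f x)" by (auto simp: op_graph_def)
    obtain s where s: "\<And>n. s n \<in> D" "s \<longlonglongrightarrow> x"
      using D closure_sequential by blast
    have "(\<lambda>n. (s n, g (s n))) \<longlonglongrightarrow> (x, f x)"
      using s eq continuous_on_tendsto_compose[OF f s(2)] by (auto intro!: tendsto_Pair)
    moreover have "(s n, g (s n)) \<in> op_graph D g" for n using s by (auto simp: op_graph_def)
    ultimately show "p \<in> closure (op_graph D g)"
      unfolding p closure_sequential by (intro exI[of _ "\<lambda>n. (s n, g (s n))"]) auto
  qed
  moreover have "op_graph D g \<subseteq> op_graph UNIV f" using eq by (auto simp: op_graph_def)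
  ultimately have "closure (op_graph D g) = op_graph UNIV f"
    using closure_minimal[OF _ closed] by blast
  then show ?thesis
    unfolding op_closure_def by (auto simp: op_graph_def fun_eq_iff)
qed

lemma weak_hyperopD:
  assumes "weak_hyperop c D hc"
  shows "csubspace D" "closure D = UNIV"
    "\<And>h x. smooth h \<Longrightarrow> x \<in> D \<Longrightarrow> hc h x \<in> D"
    "\<And>h. smooth h \<Longrightarrow> clinear_on D (hc h)"
    "\<And>h g x. smooth h \<Longrightarrow> smooth g \<Longrightarrow> x \<in> D \<Longrightarrow> hc (\<lambda>\<xi>. h \<xi> + g \<xi>) x = hc h x + hc g x"
    "\<And>h a x. smooth h \<Longrightarrow> x \<in> D \<Longrightarrow> hc (\<lambda>\<xi>. a * h \<xi>) x = scaleC a (hc h x)"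
    "\<And>h g x. smooth h \<Longrightarrow> smooth g \<Longrightarrow> x \<in> D \<Longrightarrow> hc (\<lambda>\<xi>. h \<xi> * g \<xi>) x = hc h (hc g x)"
    "\<And>x. x \<in> D \<Longrightarrow> hc (\<lambda>_. 1) x = x"
    "\<And>j x. x \<in> D \<Longrightarrow> hc (coord j) x = c j x"
    "\<And>hs h x. (\<And>k. smooth (hs k)) \<Longrightarrow> smooth h \<Longrightarrow> conv_E hs h \<Longrightarrow> x \<in> D \<Longrightarrow>
       (\<lambda>k. hc (hs k) x) \<longlonglongrightarrow> hc h x"
  using assms unfolding weak_hyperop_def by blast+

lemma weak_hyperop_const_0:
  assumes "weak_hyperop c D hc" "x \<in> D"
  shows "hc (\<lambda>_. 0) x = 0"
  using weak_hyperopD(6)[OF assms(1) smooth_const[of 1] assms(2), of 0] by simp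

lemma weak_hyperop_apply_0:
  assumes "weak_hyperop c D hc" "smooth h"
  shows "hc h 0 = 0"
  using clinear_on_zero[OF weak_hyperopD(4)[OF assms]] weak_hyperopD(1)[OF assms(1)]
  by (simp add: csubspace_def)

lemma weak_hyperop_sum:
  assumes "weak_hyperop c D hc" "x \<in> D" "\<And>m. smooth (f m)"
  shows "hc (\<lambda>\<xi>. \<Sum>m<N. f m \<xi>) x = (\<Sum>m<(N::nat). hc (f m) x)"
proof (induction N)
  case 0
  then show ?case using weak_hyperop_const_0[OF assms(1,2)] by simp
next
  case (Suc N)
  then show ?case
    using weak_hyperopD(5)[OF assms(1) smooth_sum[OF assms(3)] assms(3)[of N] assms(2)] by simp
qed

lemma conv_D0_imp_conv_E: "conv_D0 \<phi>s \<Longrightarrow> conv_E \<phi>s (\<lambda>_. 0)"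
  unfolding conv_D0_def conv_E_def by (auto simp: dpart_const intro: uniform_limit_on_subset)

lemma dpart_eq_0_on_ball:
  assumes "\<And>\<xi>. \<xi> \<in> ball 0 r \<Longrightarrow> h \<xi> = 0" "\<xi> \<in> ball 0 r"
  shows "dpart ds h \<xi> = 0"
  using assms(2)
proof (induction ds arbitrary: \<xi>)
  case Nil
  then show ?case using assms(1) by simp
next
  case (Cons i ds)
  have "open {t::real. \<xi> + t *\<^sub>R axis i 1 \<in> ball 0 r}"
    by (intro open_vimage[of "ball 0 r" "\<lambda>t. \<xi> + t *\<^sub>R axis i 1", unfolded vimage_def] continuous_intros) auto
  then have "(along_axis (dpart ds h) \<xi> i has_vector_derivative 0) (at 0)"
    by (rule has_vector_derivative_transform_within_open[OF has_vector_derivative_const])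
      (use Cons in auto)
  then show ?case by (simp add: partial_def vector_derivative_at)
qed

lemma conv_E_0_if_vanishing_on_balls:
  fixes g :: "nat \<Rightarrow> real^'n::finite \<Rightarrow> complex"
  assumes "\<And>N \<xi>. norm \<xi> < real N \<Longrightarrow> g N \<xi> = 0"
  shows "conv_E g (\<lambda>_. 0)"
  unfolding conv_E_def
proof safe
  fix ds and K :: "(real^'n) set"
  assume "compact K"
  then obtain r where r: "K \<subseteq> ball 0 r" using bounded_subset_ballD compact_imp_bounded by blast
  obtain N0 :: nat where N0: "r < real N0" using reals_Archimedean2 by blast
  have "dpart ds (g N) \<xi> = 0" if "N0 \<le> N" "\<xi> \<in> K" for N \<xi>
  proof (rule dpart_eq_0_on_ball)
    show "\<xi> \<in> ball 0 (real N)" using r that N0 of_nat_mono[OF that(1)] by fastforce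
  qed (use assms in simp)
  then have "\<forall>\<^sub>F N in sequentially. \<forall>\<xi>\<in>K. dpart ds (\<lambda>_. 0) \<xi> = dpart ds (g N) \<xi>"
    unfolding eventually_sequentially by (auto simp: dpart_const)
  from uniform_limit_cong[OF this refl] uniform_limit_const
  show "uniform_limit K (\<lambda>N. dpart ds (g N)) (dpart ds (\<lambda>_. 0)) sequentially"
    by blast
qed

lemma weak_hyperop_local:
  fixes hc :: "(real^'n::finite \<Rightarrow> complex) \<Rightarrow> 'x::complex_banach \<Rightarrow> 'x"
  assumes weak: "weak_hyperop c D hc" and x: "x \<in> D"
  obtains R where "R \<ge> 0" "\<And>h. smooth h \<Longrightarrow> (\<And>\<xi>. norm \<xi> < R \<Longrightarrow> h \<xi> = 0) \<Longrightarrow> hc h x = 0"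
proof (rule ccontr)
  assume "\<not> thesis"
  then have "\<exists>h. smooth h \<and> (\<forall>\<xi>. norm \<xi> < real N \<longrightarrow> h \<xi> = 0) \<and> hc h x \<noteq> 0" for N
    using that[of "real N"] by auto
  then obtain hs where hs: "\<And>N. smooth (hs N)" "\<And>N \<xi>. norm \<xi> < real N \<Longrightarrow> hs N \<xi> = 0"
    "\<And>N. hc (hs N) x \<noteq> 0"
    by metis
  define gs where "gs N = (\<lambda>\<xi>. complex_of_real (1 / norm (hc (hs N) x)) * hs N \<xi>)" for N
  have gs_smooth: "smooth (gs N)" for N unfolding gs_def by (rule smooth_cmult[OF hs(1)])
  have norm_gs: "norm (hc (gs N) x) = 1" for N
    unfolding gs_def weak_hyperopD(6)[OF weak hs(1) x] using hs(3)[of N] by (simp add: norm_scaleC norm_divide)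
  have "conv_E gs (\<lambda>_. 0)"
    by (rule conv_E_0_if_vanishing_on_balls) (simp add: gs_def hs(2))
  then have "(\<lambda>N. hc (gs N) x) \<longlonglongrightarrow> hc (\<lambda>_. 0) x"
    by (rule weak_hyperopD(10)[OF weak gs_smooth smooth_const _ x])
  then have "(\<lambda>N. hc (gs N) x) \<longlonglongrightarrow> 0"
    by (simp only: weak_hyperop_const_0[OF weak x])
  then have "(\<lambda>N. norm (hc (gs N) x)) \<longlonglongrightarrow> 0" by (rule tendsto_norm_zero)
  then show False by (simp add: norm_gs LIMSEQ_const_iff)
qed

lemma weak_hyperop_in_range:
  fixes hc :: "(real^'n::finite \<Rightarrow> complex) \<Rightarrow> 'x::complex_banach \<Rightarrow> 'x"
  assumes weak: "weak_hyperop c D hc" and x: "x \<in> D"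
  obtains \<psi> y where "test_fun \<psi>" "y \<in> D" "hc \<psi> y = x"
proof -
  obtain R where R: "R \<ge> 0" "\<And>h. smooth h \<Longrightarrow> (\<And>\<xi>. norm \<xi> < R \<Longrightarrow> h \<xi> = 0) \<Longrightarrow> hc h x = 0"
    using weak_hyperop_local[OF weak x] by blast
  obtain \<psi> q :: "real^'n \<Rightarrow> complex" where cut: "test_fun \<psi>" "smooth q" "\<And>\<xi>. norm \<xi> < R \<Longrightarrow> q \<xi> = 0"
    "\<And>\<xi>. \<psi> \<xi> + q \<xi> \<noteq> 0" and inv_smooth: "smooth (\<lambda>\<xi>. inverse (\<psi> \<xi> + q \<xi>))"
    using cutoff_pair_exists[OF R(1)] by blast
  define h where "h \<xi> = inverse (\<psi> \<xi> + q \<xi>)" for \<xi>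
  define y where "y = hc h x"
  have \<psi>: "smooth \<psi>" using cut(1) by (rule smooth_test_fun)
  have h: "smooth h" using inv_smooth by (simp add: h_def[abs_def])
  have y: "y \<in> D" unfolding y_def by (rule weak_hyperopD(3)[OF weak h x])
  have "hc q y = hc (\<lambda>\<xi>. q \<xi> * h \<xi>) x"
    unfolding y_def by (rule weak_hyperopD(7)[OF weak cut(2) h x, symmetric])
  also have "\<dots> = hc (\<lambda>\<xi>. h \<xi> * q \<xi>) x" by (simp add: mult.commute)
  also have "\<dots> = hc h (hc q x)" by (rule weak_hyperopD(7)[OF weak h cut(2) x])
  also have "\<dots> = 0" using R(2)[OF cut(2) cut(3)] weak_hyperop_apply_0[OF weak h] by simp
  finally have qy: "hc q y = 0" .
  have "x = hc (\<lambda>\<xi>. (\<psi> \<xi> + q \<xi>) * h \<xi>) x"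
    using weak_hyperopD(8)[OF weak x] cut(4) by (simp add: h_def)
  also have "\<dots> = hc (\<lambda>\<xi>. \<psi> \<xi> + q \<xi>) y"
    unfolding y_def by (rule weak_hyperopD(7)[OF weak smooth_add[OF \<psi> cut(2)] h x])
  also have "\<dots> = hc \<psi> y"
    using weak_hyperopD(5)[OF weak \<psi> cut(2) y] qy by simp
  finally show ?thesis using that cut(1) y by metis
qed

section \<open>The gliding hump\<close>

lemma choice_with_history:
  assumes "\<And>xs. \<exists>y. P xs y"
  obtains f where "\<And>m. P (map f [0..<m]) (f m)"
proof -
  obtain g where g: "\<And>xs. P xs (g xs)" using assms by metis
  define hist where "hist = rec_nat [] (\<lambda>_ h. h @ [g h])"
  have "hist m = map (\<lambda>i. g (hist i)) [0..<m]" for m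
    by (induction m) (simp_all add: hist_def)
  then show ?thesis using g by (intro that[of "\<lambda>i. g (hist i)"]) metis
qed

lemma norm_sum_ge_hump:
  fixes g :: "nat \<Rightarrow> 'a::real_normed_vector"
  assumes "k < n" and tail: "\<And>m. k < m \<Longrightarrow> norm (g m) \<le> (1/2)^m"
  shows "norm (g k) - (\<Sum>m<k. norm (g m)) - 2 \<le> norm (\<Sum>m<n. g m)"
proof -
  have U: "{..<n} = {..<Suc k} \<union> {Suc k..<n}" using \<open>k < n\<close> by auto
  have "(\<Sum>m<n. g m) = (\<Sum>m<Suc k. g m) + (\<Sum>m\<in>{Suc k..<n}. g m)"
    unfolding U by (rule sum.union_disjoint) auto
  then have "(\<Sum>m<n. g m) = (\<Sum>m<k. g m) + g k + (\<Sum>m\<in>{Suc k..<n}. g m)"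
    by simp
  then have "g k = (\<Sum>m<n. g m) - (\<Sum>m<k. g m) - (\<Sum>m\<in>{Suc k..<n}. g m)"
    by (simp add: algebra_simps)
  then have "norm (g k) \<le> norm (\<Sum>m<n. g m) + norm (\<Sum>m<k. g m) + norm (\<Sum>m\<in>{Suc k..<n}. g m)"
    using norm_triangle_ineq4[of "(\<Sum>m<n. g m) - (\<Sum>m<k. g m)" "\<Sum>m\<in>{Suc k..<n}. g m"]
      norm_triangle_ineq4[of "\<Sum>m<n. g m" "\<Sum>m<k. g m"] by simp
  moreover have "norm (\<Sum>m<k. g m) \<le> (\<Sum>m<k. norm (g m))" by (rule norm_sum)
  moreover have "norm (\<Sum>m\<in>{Suc k..<n}. g m) \<le> 2"
  proof -
    have "norm (\<Sum>m\<in>{Suc k..<n}. g m) \<le> (\<Sum>m\<in>{Suc k..<n}. (1/2::real)^m)"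
      using tail by (intro order_trans[OF norm_sum sum_mono]) auto
    also have "\<dots> \<le> (\<Sum>m. (1/2::real)^m)" by (rule sum_le_suminf) auto
    also have "\<dots> = 2" using suminf_geometric[of "1/2::real"] by simp
    finally show ?thesis .
  qed
  ultimately show ?thesis by linarith
qed

lemma frequently_ge_if_not_tendsto_0:
  fixes f :: "nat \<Rightarrow> real"
  assumes "\<not> f \<longlonglongrightarrow> 0" "\<And>j. 0 \<le> f j"
  obtains \<epsilon> where "0 < \<epsilon>" "\<And>n. \<exists>j\<ge>n. \<epsilon> \<le> f j"
proof -
  have "\<not> (\<forall>\<epsilon>>0. \<forall>\<^sub>F j in sequentially. f j < \<epsilon>)"
    using assms by (simp add: tendsto_iff dist_real_def)
  then obtain \<epsilon> where "\<epsilon> > 0" "\<exists>\<^sub>F j in sequentially. \<epsilon> \<le> f j"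
    by (auto simp: not_eventually not_less)
  then show ?thesis using that by (simp add: frequently_sequentially)
qed

lemma gliding_hump_step:
  fixes T :: "nat \<Rightarrow> 'a::real_normed_vector \<Rightarrow> 'b::real_normed_vector"
  assumes bl: "\<And>j. bounded_linear (T j)"
    and D: "subspace D" "closure D = UNIV"
    and pointwise: "\<And>x. x \<in> D \<Longrightarrow> (\<lambda>j. T j x) \<longlonglongrightarrow> 0"
    and frequent: "0 < \<epsilon>" "\<And>n. \<exists>j\<ge>n. \<epsilon> \<le> onorm (T j)"
    and small: "eventually S sequentially" and e: "e > 0" and X: "finite X"
  shows "\<exists>n x. S n \<and> (\<forall>x'\<in>X \<inter> D. norm (T n x') \<le> e) \<and> x \<in> D \<and> norm x \<le> 1 \<and> \<epsilon> / 2 \<le> norm (T n x)"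
proof -
  have "\<forall>x'\<in>X \<inter> D. \<forall>\<^sub>F j in sequentially. norm (T j x') \<le> e"
  proof
    fix x' assume "x' \<in> X \<inter> D"
    then have "x' \<in> D" by blast
    from tendstoD[OF pointwise[OF this] e]
    show "\<forall>\<^sub>F j in sequentially. norm (T j x') \<le> e" by eventually_elim simp
  qed
  then have "\<forall>\<^sub>F j in sequentially. \<forall>x'\<in>X \<inter> D. norm (T j x') \<le> e"
    using X by (intro eventually_ball_finite) simp_all
  with small have "\<forall>\<^sub>F j in sequentially. S j \<and> (\<forall>x'\<in>X \<inter> D. norm (T j x') \<le> e)"
    by (rule eventually_conj)
  then obtain n0 where n0: "\<And>j. j \<ge> n0 \<Longrightarrow> S j \<and> (\<forall>x'\<in>X \<inter> D. norm (T j x') \<le> e)"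
    unfolding eventually_sequentially by blast
  obtain j where j: "j \<ge> n0" "\<epsilon> \<le> onorm (T j)" using frequent(2) by blast
  obtain x where "x \<in> D" "norm x \<le> 1" "\<epsilon> / 2 \<le> norm (T j x)"
    using dense_subspace_onorm_witness[OF bl D frequent(1) j(2)] by blast
  with n0[OF j(1)] show ?thesis by blast
qed

text \<open>Each \<open>C m\<close> is chosen so large that the \<open>m\<close>-th term dominates the earlier ones at \<open>x m\<close>, and
  \<open>N m\<close> so late that the \<open>m\<close>-th term is small (in the sense of \<open>S\<close>, and at the earlier
  \<open>x i\<close>) compared with \<open>C m\<close>.\<close>

lemma gliding_hump_choice:
  fixes T :: "nat \<Rightarrow> 'a::real_normed_vector \<Rightarrow> 'b::real_normed_vector"
  assumes bl: "\<And>j. bounded_linear (T j)"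
    and D: "subspace D" "closure D = UNIV"
    and pointwise: "\<And>x. x \<in> D \<Longrightarrow> (\<lambda>j. T j x) \<longlonglongrightarrow> 0"
    and frequent: "0 < \<epsilon>" "\<And>n. \<exists>j\<ge>n. \<epsilon> \<le> onorm (T j)"
    and small: "\<And>m e. e > 0 \<Longrightarrow> eventually (S m e) sequentially"
  obtains N C x where "\<And>m. C m = 2 / \<epsilon> * (real m + 3 + (\<Sum>i<m. \<bar>C i\<bar> * onorm (T (N i))))"
    "\<And>m. S m ((1/2)^m / C m) (N m)"
    "\<And>i m. i < m \<Longrightarrow> x i \<in> D \<Longrightarrow> norm (T (N m) (x i)) \<le> (1/2)^m / C m"
    "\<And>m. x m \<in> D" "\<And>m. norm (x m) \<le> 1" "\<And>m. \<epsilon> / 2 \<le> norm (T (N m) (x m))"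
proof -
  define cc where "cc hs = 2 / \<epsilon> * (length hs + 3 + sum_list (map (\<lambda>(n, c, _). \<bar>c\<bar> * onorm (T n)) hs))"
    for hs :: "(nat \<times> real \<times> 'a) list"
  have cc_pos: "cc hs > 0" for hs
    unfolding cc_def using frequent(1) onorm_pos_le[OF bl]
    by (intro mult_pos_pos add_pos_nonneg sum_list_nonneg) auto
  define P where "P hs = (\<lambda>(n, c, x). c = cc hs \<and> S (length hs) ((1/2)^length hs / c) n
      \<and> (\<forall>x'\<in>snd ` snd ` set hs \<inter> D. norm (T n x') \<le> (1/2)^length hs / c)
      \<and> x \<in> D \<and> norm x \<le> 1 \<and> \<epsilon> / 2 \<le> norm (T n x))" for hs
  have step: "\<exists>y. P hs y" for hs
  proof -
    have e: "0 < (1/2)^length hs / cc hs" using cc_pos by simp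
    have "finite (snd ` snd ` set hs)" by simp
    from gliding_hump_step[OF bl D pointwise frequent small[where m="length hs", OF e] e this]
    obtain n x where "S (length hs) ((1/2)^length hs / cc hs) n"
      "\<forall>x'\<in>snd ` snd ` set hs \<inter> D. norm (T n x') \<le> (1/2)^length hs / cc hs"
      "x \<in> D" "norm x \<le> 1" "\<epsilon> / 2 \<le> norm (T n x)"
      by blast
    then have "P hs (n, cc hs, x)" by (simp add: P_def)
    then show ?thesis by blast
  qed
  obtain f where f: "\<And>m. P (map f [0..<m]) (f m)" using choice_with_history[of P, OF step] by blast
  define N where "N m = fst (f m)" for m
  define C where "C m = fst (snd (f m))" for m
  define x where "x m = snd (snd (f m))" for m
  have Pm: "C m = cc (map f [0..<m]) \<and> S m ((1/2)^m / C m) (N m)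
      \<and> (\<forall>x'\<in>snd ` snd ` set (map f [0..<m]) \<inter> D. norm (T (N m) x') \<le> (1/2)^m / C m)
      \<and> x m \<in> D \<and> norm (x m) \<le> 1 \<and> \<epsilon> / 2 \<le> norm (T (N m) (x m))" for m
    using f[of m] unfolding P_def case_prod_beta C_def[symmetric] N_def[symmetric] x_def[symmetric]
      length_map length_upt diff_zero .
  show ?thesis
  proof (rule that)
    show "C m = 2 / \<epsilon> * (real m + 3 + (\<Sum>i<m. \<bar>C i\<bar> * onorm (T (N i))))" for m
    proof -
      have "sum_list (map (\<lambda>(n, c, _). \<bar>c\<bar> * onorm (T n)) (map f [0..<m])) = (\<Sum>i<m. \<bar>C i\<bar> * onorm (T (N i)))"
        by (induction m) (simp_all add: N_def C_def case_prod_beta)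
      then show ?thesis using Pm[of m] by (simp add: cc_def)
    qed
    show "norm (T (N m) (x i)) \<le> (1/2)^m / C m" if "i < m" "x i \<in> D" for i m
    proof -
      have "f i \<in> set (map f [0..<m])" using that by simp
      then have "x i \<in> snd ` snd ` set (map f [0..<m]) \<inter> D"
        using that(2) unfolding x_def by blast
      then show ?thesis using Pm[of m] by blast
    qed
  qed (use Pm in blast)+
qed

lemma gliding_hump_sequence:
  fixes T :: "nat \<Rightarrow> 'a::real_normed_vector \<Rightarrow> 'b::real_normed_vector"
  assumes bl: "\<And>j. bounded_linear (T j)"
    and D: "subspace D" "closure D = UNIV"
    and pointwise: "\<And>x. x \<in> D \<Longrightarrow> (\<lambda>j. T j x) \<longlonglongrightarrow> 0"
    and frequent: "0 < \<epsilon>" "\<And>n. \<exists>j\<ge>n. \<epsilon> \<le> onorm (T j)"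
    and small: "\<And>m e. e > 0 \<Longrightarrow> eventually (S m e) sequentially"
  obtains N C x where "\<And>m. C m > 0" "\<And>m. S m ((1/2)^m / C m) (N m)"
    "\<And>k. x k \<in> D" "\<And>k. norm (x k) \<le> 1"
    "\<And>i m. i < m \<Longrightarrow> C m * norm (T (N m) (x i)) \<le> (1/2)^m"
    "\<And>k. real k + 3 + (\<Sum>i<k. C i * onorm (T (N i))) \<le> C k * norm (T (N k) (x k))"
proof (rule gliding_hump_choice[where S=S, OF bl D pointwise frequent small])
  fix N C x
  assume C_eq: "\<And>m. C m = 2 / \<epsilon> * (real m + 3 + (\<Sum>i<m. \<bar>C i\<bar> * onorm (T (N i))))"
    and S: "\<And>m. S m ((1/2)^m / C m) (N m)"
    and later: "\<And>i m. i < m \<Longrightarrow> x i \<in> D \<Longrightarrow> norm (T (N m) (x i)) \<le> (1/2)^m / C m"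
    and x: "\<And>m. x m \<in> D" "\<And>m. norm (x m) \<le> 1" "\<And>m. \<epsilon> / 2 \<le> norm (T (N m) (x m))"
  have C_pos: "C m > 0" for m
  proof -
    have "0 \<le> (\<Sum>i<m. \<bar>C i\<bar> * onorm (T (N i)))"
      using onorm_pos_le[OF bl] by (intro sum_nonneg mult_nonneg_nonneg) simp_all
    then show ?thesis unfolding C_eq[of m] using frequent(1) by (intro mult_pos_pos) simp_all
  qed
  show thesis
  proof (rule that[OF C_pos S x(1,2)])
    show "C m * norm (T (N m) (x i)) \<le> (1/2)^m" if "i < m" for i m
      using later[OF that x(1)] C_pos[of m] by (simp add: field_simps)
    show "real k + 3 + (\<Sum>i<k. C i * onorm (T (N i))) \<le> C k * norm (T (N k) (x k))" for k
    proof -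
      have "real k + 3 + (\<Sum>i<k. C i * onorm (T (N i))) = C k * (\<epsilon> / 2)"
        using C_eq[of k] C_pos frequent(1) by (simp add: abs_of_pos field_simps)
      also have "\<dots> \<le> C k * norm (T (N k) (x k))"
        using x(3)[of k] C_pos[of k] by (intro mult_left_mono) simp_all
      finally show ?thesis .
    qed
  qed
qed

lemma gliding_hump_lower_bound:
  fixes T :: "nat \<Rightarrow> 'a::real_normed_vector \<Rightarrow> 'b::real_normed_vector"
  assumes bl: "\<And>j. bounded_linear (T j)" and C: "\<And>m. C m > 0" and x: "norm (x k) \<le> 1"
    and later: "\<And>m. k < m \<Longrightarrow> C m * norm (T (N m) (x k)) \<le> (1/2)^m"
    and dominant: "real k + 3 + (\<Sum>i<k. C i * onorm (T (N i))) \<le> C k * norm (T (N k) (x k))"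
    and "k < n"
  shows "real k + 1 \<le> norm (\<Sum>m<n. C m *\<^sub>R T (N m) (x k))"
proof -
  have earlier: "norm (C m *\<^sub>R T (N m) (x k)) \<le> C m * onorm (T (N m))" for m
  proof -
    have "norm (T (N m) (x k)) \<le> onorm (T (N m)) * norm (x k)" by (rule onorm[OF bl])
    also have "\<dots> \<le> onorm (T (N m))"
      using x onorm_pos_le[OF bl] by (simp add: mult_left_le)
    finally show ?thesis using C[of m] by (simp add: mult_left_mono)
  qed
  have "(\<Sum>m<k. norm (C m *\<^sub>R T (N m) (x k))) \<le> (\<Sum>m<k. C m * onorm (T (N m)))"
    by (rule sum_mono) (rule earlier)
  moreover have "norm (C k *\<^sub>R T (N k) (x k)) = C k * norm (T (N k) (x k))" using C[of k] by simp
  ultimately have "real k + 1 \<le> norm (C k *\<^sub>R T (N k) (x k)) - (\<Sum>m<k. norm (C m *\<^sub>R T (N m) (x k))) - 2"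
    using dominant by linarith
  also have "\<dots> \<le> norm (\<Sum>m<n. C m *\<^sub>R T (N m) (x k))"
    by (rule norm_sum_ge_hump[OF \<open>k < n\<close>]) (use later C in \<open>simp add: less_imp_le\<close>)
  finally show ?thesis .
qed

lemma gliding_hump:
  fixes T :: "nat \<Rightarrow> 'a::real_normed_vector \<Rightarrow> 'b::real_normed_vector"
  assumes bl: "\<And>j. bounded_linear (T j)"
    and D: "subspace D" "closure D = UNIV"
    and pointwise: "\<And>x. x \<in> D \<Longrightarrow> (\<lambda>j. T j x) \<longlonglongrightarrow> 0"
    and not_uniform: "\<not> (\<lambda>j. onorm (T j)) \<longlonglongrightarrow> 0"
    and small: "\<And>m e. e > 0 \<Longrightarrow> eventually (S m e) sequentially"
  obtains N C x where "\<And>m. C m > 0" "\<And>m. S m ((1/2)^m / C m) (N m)"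
    "\<And>k. x k \<in> D" "\<And>k. norm (x k) \<le> 1"
    "\<And>k n. k < n \<Longrightarrow> real k + 1 \<le> norm (\<Sum>m<n. C m *\<^sub>R T (N m) (x k))"
proof -
  obtain \<epsilon> where \<epsilon>: "0 < \<epsilon>" "\<And>n. \<exists>j\<ge>n. \<epsilon> \<le> onorm (T j)"
    using frequently_ge_if_not_tendsto_0[OF not_uniform onorm_pos_le[OF bl]] by blast
  show thesis
  proof (rule gliding_hump_sequence[where S=S, OF bl D pointwise \<epsilon> small])
    fix N C x
    assume C: "\<And>m. C m > 0" and S: "\<And>m. S m ((1/2)^m / C m) (N m)"
      and x: "\<And>k. x k \<in> D" "\<And>k. norm (x k) \<le> 1"
      and later: "\<And>i m. i < m \<Longrightarrow> C m * norm (T (N m) (x i)) \<le> (1/2)^m"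
      and dominant: "\<And>k. real k + 3 + (\<Sum>i<k. C i * onorm (T (N i))) \<le> C k * norm (T (N k) (x k))"
    show thesis
    proof (rule that[OF C S x])
      show "real k + 1 \<le> norm (\<Sum>m<n. C m *\<^sub>R T (N m) (x k))" if "k < n" for k n
        by (rule gliding_hump_lower_bound[where T=T and C=C and N=N and x=x,
              OF bl C x(2) later[of k] dominant that])
    qed
  qed
qed

section \<open>The closures of a weak hyperoperator\<close>

locale bounded_closures_weak_hyperop =
  fixes c :: "'n::finite \<Rightarrow> 'x::complex_banach \<Rightarrow> 'x"
    and D :: "'x set"
    and hc :: "(real ^ 'n \<Rightarrow> complex) \<Rightarrow> 'x \<Rightarrow> 'x"
  assumes weak: "weak_hyperop c D hc"
    and bdd: "\<And>\<phi>. test_fun \<phi> \<Longrightarrow>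
               closure (op_graph D (hc \<phi>)) = op_graph UNIV (op_closure D (hc \<phi>))
             \<and> bounded_cop (op_closure D (hc \<phi>))"
    and ker: "\<And>x. (\<forall>\<phi>. test_fun \<phi> \<longrightarrow> op_closure D (hc \<phi>) x = 0) \<Longrightarrow> x = 0"
begin

abbreviation clos :: "(real ^ 'n \<Rightarrow> complex) \<Rightarrow> 'x \<Rightarrow> 'x" where
  "clos \<phi> \<equiv> op_closure D (hc \<phi>)"

lemma bounded_linear_clos: "test_fun \<phi> \<Longrightarrow> bounded_linear (clos \<phi>)"
  using bdd bounded_cop_bounded_linear by blast

lemma continuous_on_clos: "test_fun \<phi> \<Longrightarrow> continuous_on UNIV (clos \<phi>)"
  using bounded_linear_clos linear_continuous_on by blast

lemma clos_eq: "test_fun \<phi> \<Longrightarrow> x \<in> D \<Longrightarrow> clos \<phi> x = hc \<phi> x"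
  using closure_subset[of "op_graph D (hc \<phi>)"] bdd[of \<phi>] by (auto simp: op_graph_def)

lemma clos_add:
  assumes "test_fun \<phi>" "test_fun \<psi>"
  shows "clos (\<lambda>\<xi>. \<phi> \<xi> + \<psi> \<xi>) = (\<lambda>x. clos \<phi> x + clos \<psi> x)"
proof (rule op_closure_continuous_extension[OF _ weak_hyperopD(2)[OF weak]])
  show "continuous_on UNIV (\<lambda>x. clos \<phi> x + clos \<psi> x)"
    using assms by (intro continuous_on_add continuous_on_clos)
  show "hc (\<lambda>\<xi>. \<phi> \<xi> + \<psi> \<xi>) x = clos \<phi> x + clos \<psi> x" if "x \<in> D" for x
    using weak_hyperopD(5)[OF weak smooth_test_fun[OF assms(1)] smooth_test_fun[OF assms(2)] that]
      clos_eq[OF assms(1) that] clos_eq[OF assms(2) that] by simp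
qed

lemma clos_scaleC:
  assumes "test_fun \<phi>"
  shows "clos (\<lambda>\<xi>. a * \<phi> \<xi>) = (\<lambda>x. scaleC a (clos \<phi> x))"
proof (rule op_closure_continuous_extension[OF _ weak_hyperopD(2)[OF weak]])
  show "continuous_on UNIV (\<lambda>x. scaleC a (clos \<phi> x))"
    using continuous_on_compose[OF continuous_on_clos[OF assms] linear_continuous_on[OF bounded_linear_scaleC]]
    by (simp add: o_def)
  show "hc (\<lambda>\<xi>. a * \<phi> \<xi>) x = scaleC a (clos \<phi> x)" if "x \<in> D" for x
    using weak_hyperopD(6)[OF weak smooth_test_fun[OF assms] that] clos_eq[OF assms that] by simp
qed

lemma clos_mult:
  assumes "test_fun \<phi>" "test_fun \<psi>"
  shows "clos (\<lambda>\<xi>. \<phi> \<xi> * \<psi> \<xi>) = clos \<phi> \<circ> clos \<psi>"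
proof (rule op_closure_continuous_extension[OF _ weak_hyperopD(2)[OF weak]])
  show "continuous_on UNIV (clos \<phi> \<circ> clos \<psi>)"
    using continuous_on_clos[OF assms(2)] continuous_on_subset[OF continuous_on_clos[OF assms(1)] subset_UNIV]
    by (rule continuous_on_compose)
  show "hc (\<lambda>\<xi>. \<phi> \<xi> * \<psi> \<xi>) x = (clos \<phi> \<circ> clos \<psi>) x" if "x \<in> D" for x
    using weak_hyperopD(7)[OF weak smooth_test_fun[OF assms(1)] smooth_test_fun[OF assms(2)] that]
      clos_eq[OF assms(1) weak_hyperopD(3)[OF weak smooth_test_fun[OF assms(2)] that]]
      clos_eq[OF assms(2) that] by simp
qed

lemma D_subset_hyper_dom: "D \<subseteq> hyper_dom clos"
proof
  fix x assume x: "x \<in> D"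
  obtain \<psi> y where \<psi>: "test_fun \<psi>" "y \<in> D" "hc \<psi> y = x"
    by (rule weak_hyperop_in_range[OF weak x])
  have "clos \<psi> y = x" using clos_eq[OF \<psi>(1,2)] \<psi>(3) by simp
  then have "x \<in> range (clos \<psi>)" by blast
  then show "x \<in> hyper_dom clos" using \<psi>(1) unfolding hyper_dom_def by blast
qed

lemma clos_tendsto_pointwise:
  assumes tf: "\<And>j. test_fun (\<phi>s j)" and conv: "conv_D0 \<phi>s" and x: "x \<in> D"
  shows "(\<lambda>j. clos (\<phi>s j) x) \<longlonglongrightarrow> 0"
proof -
  have "(\<lambda>j. hc (\<phi>s j) x) \<longlonglongrightarrow> hc (\<lambda>_. 0) x"
    by (rule weak_hyperopD(10)[OF weak smooth_test_fun[OF tf] smooth_const conv_D0_imp_conv_E[OF conv] x])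
  then show ?thesis by (simp only: clos_eq[OF tf x] weak_hyperop_const_0[OF weak x])
qed

lemma clos_suminf:
  assumes tf: "\<And>m. test_fun (\<phi>s m)" and K: "compact K" "\<And>m. tsupport (\<phi>s m) \<subseteq> K"
    and C: "\<And>m. C m \<ge> 0"
    and small: "\<And>m ds \<xi>. length ds \<le> m \<Longrightarrow> C m * norm (dpart ds (\<phi>s m) \<xi>) \<le> (1/2)^m"
  obtains \<Psi> where "test_fun \<Psi>" "\<And>x. x \<in> D \<Longrightarrow> (\<lambda>n. \<Sum>m<n. C m *\<^sub>R clos (\<phi>s m) x) \<longlonglongrightarrow> clos \<Psi> x"
proof -
  define f where "f m = (\<lambda>\<xi>. complex_of_real (C m) * \<phi>s m \<xi>)" for m
  have f_smooth: "smooth (f m)" for m unfolding f_def by (rule smooth_cmult[OF smooth_test_fun[OF tf]])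
  have "\<forall>\<^sub>F m in sequentially. \<forall>\<xi>. norm (dpart ds (f m) \<xi>) \<le> (1/2)^m" for ds
    unfolding eventually_sequentially
  proof (intro exI[of _ "length ds"] allI impI)
    fix m \<xi> assume "length ds \<le> m"
    then show "norm (dpart ds (f m) \<xi>) \<le> (1/2)^m"
      using small C[of m] by (simp add: f_def dpart_cmult[OF smooth_test_fun[OF tf]] norm_mult)
  qed
  then have bound: "\<exists>M. summable M \<and> (\<forall>\<^sub>F m in sequentially. \<forall>\<xi>. norm (dpart ds (f m) \<xi>) \<le> M m)" for ds
    by (intro exI[of _ "\<lambda>m. (1/2)^m"]) simp
  have "tsupport (f m) \<subseteq> tsupport (\<phi>s m)" for m
    unfolding f_def tsupport_def by (intro closure_mono) auto
  then have "tsupport (f m) \<subseteq> K" for m using K(2) by blast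
  note \<Psi> = test_fun_suminf[OF f_smooth K(1) this bound]
  show ?thesis
  proof (rule that[OF \<Psi>(1)])
    fix x assume x: "x \<in> D"
    have partial_sums: "hc (\<lambda>\<xi>. \<Sum>m<n. f m \<xi>) x = (\<Sum>m<n. C m *\<^sub>R clos (\<phi>s m) x)" for n
    proof -
      have "hc (\<lambda>\<xi>. \<Sum>m<n. f m \<xi>) x = (\<Sum>m<n. hc (f m) x)"
        by (rule weak_hyperop_sum[OF weak x f_smooth])
      also have "\<dots> = (\<Sum>m<n. C m *\<^sub>R clos (\<phi>s m) x)"
      proof (rule sum.cong[OF refl])
        fix m
        have "hc (f m) x = scaleC (complex_of_real (C m)) (hc (\<phi>s m) x)"
          unfolding f_def by (rule weak_hyperopD(6)[OF weak smooth_test_fun[OF tf] x])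
        then show "hc (f m) x = C m *\<^sub>R clos (\<phi>s m) x"
          by (simp only: scaleC_of_real clos_eq[OF tf x])
      qed
      finally show ?thesis .
    qed
    have "(\<lambda>n. hc (\<lambda>\<xi>. \<Sum>m<n. f m \<xi>) x) \<longlonglongrightarrow> hc (\<lambda>\<xi>. \<Sum>m. f m \<xi>) x"
      by (rule weak_hyperopD(10)[OF weak smooth_sum[OF f_smooth] smooth_test_fun[OF \<Psi>(1)] \<Psi>(2) x])
    then show "(\<lambda>n. \<Sum>m<n. C m *\<^sub>R clos (\<phi>s m) x) \<longlonglongrightarrow> clos (\<lambda>\<xi>. \<Sum>m. f m \<xi>) x"
      by (simp only: partial_sums clos_eq[OF \<Psi>(1) x])
  qed
qed

lemma clos_tendsto_0:
  assumes tf: "\<And>j. test_fun (\<phi>s j)" and conv: "conv_D0 \<phi>s"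
  shows "(\<lambda>j. onorm (clos (\<phi>s j))) \<longlonglongrightarrow> 0"
proof (rule ccontr)
  assume not_uniform: "\<not> ?thesis"
  define S where "S m e j \<longleftrightarrow> (\<forall>ds. length ds \<le> m \<longrightarrow> (\<forall>\<xi>. norm (dpart ds (\<phi>s j) \<xi>) \<le> e))" for m e j
  have small: "eventually (S m e) sequentially" if "e > 0" for m e
    unfolding S_def by (rule conv_D0_eventually_small[OF conv that])
  obtain K where K: "compact K" "\<And>j. tsupport (\<phi>s j) \<subseteq> K" using conv by (auto simp: conv_D0_def)
  show False
  proof (rule gliding_hump[where S=S, OF bounded_linear_clos[OF tf]
        subspace_csubspace[OF weak_hyperopD(1)[OF weak]] weak_hyperopD(2)[OF weak]
        clos_tendsto_pointwise[OF tf conv] not_uniform small])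
    fix N C x
    assume C: "\<And>m. C m > 0" and S: "\<And>m. S m ((1/2)^m / C m) (N m)"
      and x: "\<And>k. x k \<in> D" "\<And>k. norm (x k) \<le> 1"
      and lower: "\<And>k n. k < n \<Longrightarrow> real k + 1 \<le> norm (\<Sum>m<n. C m *\<^sub>R clos (\<phi>s (N m)) (x k))"
    have small_terms: "C m * norm (dpart ds (\<phi>s (N m)) \<xi>) \<le> (1/2)^m" if "length ds \<le> m" for m ds \<xi>
      using S[of m] C[of m] that by (simp add: S_def field_simps)
    show False
    proof (rule clos_suminf[OF tf K(1) K(2) less_imp_le[OF C] small_terms])
      fix \<Psi> assume \<Psi>: "test_fun \<Psi>"
        and lim: "\<And>x. x \<in> D \<Longrightarrow> (\<lambda>n. \<Sum>m<n. C m *\<^sub>R clos (\<phi>s (N m)) x) \<longlonglongrightarrow> clos \<Psi> x"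
      obtain k :: nat where k: "onorm (clos \<Psi>) < real k" using reals_Archimedean2 by blast
      have "real k + 1 \<le> norm (clos \<Psi> (x k))"
        using lower[of k]
        by (intro LIMSEQ_le_const[OF tendsto_norm[OF lim[OF x(1)]]]) (auto intro: exI[of _ "Suc k"])
      also have "\<dots> \<le> onorm (clos \<Psi>) * norm (x k)" by (rule onorm[OF bounded_linear_clos[OF \<Psi>]])
      also have "\<dots> \<le> onorm (clos \<Psi>)"
        using x(2)[of k] onorm_pos_le[OF bounded_linear_clos[OF \<Psi>]] by (simp add: mult_left_le)
      finally show False using k by linarith
    qed
  qed
qed

lemma hyperop_clos: "hyperop clos"
  unfolding hyperop_def
proof (intro conjI allI impI)
  show "bounded_cop (clos \<phi>)" if "test_fun \<phi>" for \<phi> using bdd that by blast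
  show "clos (\<lambda>\<xi>. \<phi> \<xi> + \<psi> \<xi>) = (\<lambda>x. clos \<phi> x + clos \<psi> x)" if "test_fun \<phi>" "test_fun \<psi>" for \<phi> \<psi>
    using clos_add that .
  show "clos (\<lambda>\<xi>. a * \<phi> \<xi>) = (\<lambda>x. scaleC a (clos \<phi> x))" if "test_fun \<phi>" for \<phi> a
    using clos_scaleC that .
  show "(\<lambda>j. onorm (clos (\<phi>s j))) \<longlonglongrightarrow> 0" if "\<forall>j. test_fun (\<phi>s j)" "conv_D0 \<phi>s" for \<phi>s
    using clos_tendsto_0 that by blast
  show "clos (\<lambda>\<xi>. \<phi> \<xi> * \<psi> \<xi>) = clos \<phi> \<circ> clos \<psi>" if "test_fun \<phi>" "test_fun \<psi>" for \<phi> \<psi>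
    using clos_mult that .
  show "closure (\<Union>\<phi>\<in>{\<phi>. test_fun \<phi>}. range (clos \<phi>)) = UNIV"
    using closure_mono[OF D_subset_hyper_dom] weak_hyperopD(2)[OF weak] unfolding hyper_dom_def by auto
  show "x = 0" if "\<forall>\<phi>. test_fun \<phi> \<longrightarrow> clos \<phi> x = 0" for x
    using ker that by blast
qed

lemma assoc_tuple_clos:
  assumes "test_fun \<phi>"
  shows "assoc_tuple clos j (clos \<phi> y) = clos (\<lambda>\<xi>. coord j \<xi> * \<phi> \<xi>) y"
proof -
  have commute: "clos \<psi> (clos (\<lambda>\<xi>. coord j \<xi> * \<phi>' \<xi>) w) = clos (\<lambda>\<xi>. \<psi> \<xi> * coord j \<xi>) (clos \<phi>' w)"
    if "test_fun \<psi>" "test_fun \<phi>'" for \<psi> \<phi>' w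
  proof -
    have "clos \<psi> (clos (\<lambda>\<xi>. coord j \<xi> * \<phi>' \<xi>) w) = clos (\<lambda>\<xi>. \<psi> \<xi> * (coord j \<xi> * \<phi>' \<xi>)) w"
      using clos_mult[OF that(1) test_fun_mult[OF that(2) smooth_coord]] by simp
    also have "\<dots> = clos (\<lambda>\<xi>. (\<psi> \<xi> * coord j \<xi>) * \<phi>' \<xi>) w"
      by (simp add: mult.assoc)
    also have "\<dots> = clos (\<lambda>\<xi>. \<psi> \<xi> * coord j \<xi>) (clos \<phi>' w)"
      using clos_mult[OF test_fun_mult[OF that(1) smooth_coord] that(2)] by (simp add: mult.commute)
    finally show ?thesis .
  qed
  let ?P = "\<lambda>z. \<exists>\<phi>' y'. test_fun \<phi>' \<and> clos \<phi> y = clos \<phi>' y' \<and> z = clos (\<lambda>\<xi>. coord j \<xi> * \<phi>' \<xi>) y'"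
  have "?P (clos (\<lambda>\<xi>. coord j \<xi> * \<phi> \<xi>) y)" using assms by blast
  then have "?P (SOME z. ?P z)" by (rule someI)
  then obtain \<phi>' y' where \<phi>': "test_fun \<phi>'" "clos \<phi> y = clos \<phi>' y'"
    and some: "(SOME z. ?P z) = clos (\<lambda>\<xi>. coord j \<xi> * \<phi>' \<xi>) y'"
    by blast
  have "clos (\<lambda>\<xi>. coord j \<xi> * \<phi>' \<xi>) y' - clos (\<lambda>\<xi>. coord j \<xi> * \<phi> \<xi>) y = 0"
  proof (rule ker, intro allI impI)
    fix \<psi> :: "real^'n \<Rightarrow> complex" assume \<psi>: "test_fun \<psi>"
    show "clos \<psi> (clos (\<lambda>\<xi>. coord j \<xi> * \<phi>' \<xi>) y' - clos (\<lambda>\<xi>. coord j \<xi> * \<phi> \<xi>) y) = 0"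
      using commute[OF \<psi> \<phi>'(1)] commute[OF \<psi> assms] \<phi>'(2)
      by (simp add: linear_diff[OF bounded_linear.linear[OF bounded_linear_clos[OF \<psi>]]])
  qed
  with some show ?thesis unfolding assoc_tuple_def by simp
qed

lemma tuple_graph_D_subset: "tuple_graph D c \<subseteq> tuple_graph (hyper_dom clos) (assoc_tuple clos)"
proof
  fix p assume "p \<in> tuple_graph D c"
  then obtain x where x: "x \<in> D" and p: "p = (x, \<chi> j. c j x)" unfolding tuple_graph_def by blast
  obtain \<psi> y where \<psi>: "test_fun \<psi>" "y \<in> D" "hc \<psi> y = x"
    by (rule weak_hyperop_in_range[OF weak x])
  have "assoc_tuple clos j x = c j x" for j
  proof -
    have "assoc_tuple clos j x = clos (\<lambda>\<xi>. coord j \<xi> * \<psi> \<xi>) y"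
      using assoc_tuple_clos[OF \<psi>(1), of j y] unfolding clos_eq[OF \<psi>(1,2)] \<psi>(3) .
    also have "\<dots> = hc (coord j) (hc \<psi> y)"
      using clos_eq[OF test_fun_mult[OF \<psi>(1) smooth_coord] \<psi>(2)]
        weak_hyperopD(7)[OF weak smooth_coord smooth_test_fun[OF \<psi>(1)] \<psi>(2)] by simp
    also have "\<dots> = c j x" using weak_hyperopD(9)[OF weak x] \<psi>(3) by simp
    finally show ?thesis .
  qed
  then show "p \<in> tuple_graph (hyper_dom clos) (assoc_tuple clos)"
    using D_subset_hyper_dom x unfolding p tuple_graph_def by auto
qed

lemma tuple_graph_hyper_dom_subset:
  "tuple_graph (hyper_dom clos) (assoc_tuple clos) \<subseteq> closure (tuple_graph D c)"
proof
  fix p assume "p \<in> tuple_graph (hyper_dom clos) (assoc_tuple clos)"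
  then obtain \<phi> y where \<phi>: "test_fun \<phi>" and p: "p = (clos \<phi> y, \<chi> j. assoc_tuple clos j (clos \<phi> y))"
    unfolding tuple_graph_def hyper_dom_def by blast
  obtain s where s: "\<And>n. s n \<in> D" "s \<longlonglongrightarrow> y"
    using weak_hyperopD(2)[OF weak] closure_sequential by blast
  define xs where "xs n = hc \<phi> (s n)" for n
  have xs: "xs n \<in> D" for n unfolding xs_def by (rule weak_hyperopD(3)[OF weak smooth_test_fun[OF \<phi>] s(1)])
  have c_xs: "c j (xs n) = clos (\<lambda>\<xi>. coord j \<xi> * \<phi> \<xi>) (s n)" for j n
    using weak_hyperopD(9)[OF weak xs[of n]] weak_hyperopD(7)[OF weak smooth_coord smooth_test_fun[OF \<phi>] s(1)]
      clos_eq[OF test_fun_mult[OF \<phi> smooth_coord] s(1)] by (simp add: xs_def)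
  have "(\<lambda>n. (xs n, \<chi> j. c j (xs n))) \<longlonglongrightarrow> (clos \<phi> y, \<chi> j. clos (\<lambda>\<xi>. coord j \<xi> * \<phi> \<xi>) y)"
    unfolding c_xs unfolding xs_def clos_eq[OF \<phi> s(1), symmetric]
    using \<phi> test_fun_mult[OF \<phi> smooth_coord]
    by (intro tendsto_Pair tendsto_vec_lambda continuous_on_tendsto_compose[OF continuous_on_clos s(2)]) auto
  moreover have "(xs n, \<chi> j. c j (xs n)) \<in> tuple_graph D c" for n
    using xs unfolding tuple_graph_def by blast
  ultimately show "p \<in> closure (tuple_graph D c)"
    unfolding p assoc_tuple_clos[OF \<phi>] closure_sequential
    by (intro exI[of _ "\<lambda>n. (xs n, \<chi> j. c j (xs n))"]) auto
qed

lemma closure_tuple_graph_clos: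
  "closure (tuple_graph (hyper_dom clos) (assoc_tuple clos)) = closure (tuple_graph D c)"
  using closure_minimal[OF tuple_graph_hyper_dom_subset closed_closure] closure_mono[OF tuple_graph_D_subset]
  by blast

end

theorem proposition4p6:
  fixes c :: "'n::finite \<Rightarrow> 'x::complex_banach \<Rightarrow> 'x"
    and D :: "'x set"
    and hc :: "(real ^ 'n \<Rightarrow> complex) \<Rightarrow> 'x \<Rightarrow> 'x"
    and A :: "(real ^ 'n \<Rightarrow> complex) \<Rightarrow> 'x \<Rightarrow> 'x"
  assumes weak: "weak_hyperop c D hc"
    and bdd: "\<And>\<phi>. test_fun \<phi> \<Longrightarrow>
               closure (op_graph D (hc \<phi>)) = op_graph UNIV (op_closure D (hc \<phi>))
             \<and> bounded_cop (op_closure D (hc \<phi>))"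
    and ker: "\<And>x. (\<forall>\<phi>. test_fun \<phi> \<longrightarrow> op_closure D (hc \<phi>) x = 0) \<Longrightarrow> x = 0"
    and A_def: "A = (\<lambda>\<phi>. op_closure D (hc \<phi>))"
  shows "hyperop A \<and> D \<subseteq> hyper_dom A
       \<and> closure (tuple_graph (hyper_dom A) (assoc_tuple A)) = closure (tuple_graph D c)"
proof -
  interpret bounded_closures_weak_hyperop c D hc
    using weak bdd ker by unfold_locales
  show ?thesis
    unfolding A_def using hyperop_clos D_subset_hyper_dom closure_tuple_graph_clos by blast
qed
end
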